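(* Let $F,G\in R$ have $Y$-degrees $N>0$ and $M>0$ respectively. Assume that $J(F,G)\in k((X))$, that $M\,O_0(F)=N\,O_0(G)$ (i.e. $\mathrm{UNP}(F)\|_0\mathrm{UNP}(G)$), and that either $\mathrm{int}(F,Y)<0$ or $\mathrm{int}(G,Y)<0$. Then $\mathrm{UNP}(F)\,|.|\,\mathrm{UNP}(G)$, and for every $i$ with $1\le i<\min(\iota(F),\iota(G))$ the polynomials $P_i^{(F)}$ and $P_i^{(G)}$ are related. Moreover, if $\widehat O(F)=\widehat O(G)$ then $\mathrm{UNP}(F)\|\mathrm{UNP}(G)$, and hence in particular $M\,\mathrm{int}(F,Y)=N\,\mathrm{int}(G,Y)$ and $M\widehat L(F)=N\widehat L(G)$.
   Context: Let $k$ be an algebraically closed field of characteristic zero, $R=k((X))[Y]$, $J(F,G)=F_XG_Y-F_YG_X$ (partial derivatives). For $F,G\in R$ of $Y$-degrees $N,M>0$ with leading $Y$-coefficients $F_0,G_0$, choose an integer $\nu>0$ such that $F(X^\nu,Y)=F_0(X^\nu)\prod_{i=1}^N(Y-z_i(X))$ and $G(X^\nu,Y)=G_0(X^\nu)\prod_{e=1}^M(Y-w_e(X))$ with $z_i,w_e\in k((X))$; the notions below do not depend on $\nu$. $\mathrm{ord}_X0=\infty$; for $0\ne y\in k((X))$, $\mathrm{inco}_Xy\in k\setminus\{0\}$ is the coefficient of $X^{\mathrm{ord}_Xy}$ in $y$. $\mathrm{int}(F,Y)=\mathrm{ord}_XF(X,0)$. Root orders: $O_0(F)=\mathrm{ord}_XF_0$,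 and $O_1(F)<\dots<O_{\iota(F)}(F)$ are the distinct elements of $\{\frac1\nu\mathrm{ord}_Xz_i(X):1\le i\le N\}$ (rationals, possibly $O_{\iota(F)}(F)=\infty$); $\iota(F)$ is the index and $\widehat O(F)=O_{\iota(F)}(F)$. For $c\in\mathbb Q\cup\{\infty\}$ let $(<c),(=c),(>c)$ be the sets of $i$ with $\mathrm{ord}_Xz_i$ respectively $<,=,>$ $c\nu$; $L(F,c)=|(=c)|+|(>c)|$; $L_i(F)=L(F,O_i(F))$ for $1\le i\le\iota(F)$ and $\widehat L(F)=L_{\iota(F)}(F)$. $P^{(F,c)}(Y)=\mathrm{inco}_XF_0\prod_{i\in(<c)}\mathrm{inco}_Xz_i\prod_{i\in(=c)}(Y-\mathrm{inco}_Xz_i)\cdot Y^{|(>c)|}\in k[Y]$ (with $\mathrm{inco}_X0:=0$), and $P_i^{(F)}=P^{(F,O_i(F))}$ for $1\le i\le\iota(F)$. The same notation applies to $G$ with the $w_e$. Nonzero $P,Q\in k[Y]$ of degrees $n,m$ are related if $P^m=\lambda Q^n$ for some $\lambda\in k\setminus\{0\}$. For $0\le j\le\min(\iota(F),\iota(G))$, $\mathrm{UNP}(F)\|_j\mathrm{UNP}(G)$ means $MO_0(F)=NO_0(G)$ and $O_i(F)=O_i(G)$, $ML_i(F)=NL_i(G)$ for $1\le i\le j$. $\mathrm{UNP}(F)\|\mathrm{UNP}(G)$ means $\iota(F)=\iota(G)$ and $\mathrm{UNP}(F)\|_{\iota(F)}\mathrm{UNP}(G)$. $\mathrm{UNP}(F)<\mathrm{UNP}(G)$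 means $\widehat O(F)<\widehat O(G)$, $\widehat L(G)=1$, and either [$\iota(F)=\iota(G)$, $\mathrm{UNP}(F)\|_{\iota(F)-1}\mathrm{UNP}(G)$ and $M\widehat L(F)=N\widehat L(G)$] or [$\iota(F)=\iota(G)-1$ and $\mathrm{UNP}(F)\|_{\iota(F)}\mathrm{UNP}(G)$]. $\mathrm{UNP}(F)\,|.|\,\mathrm{UNP}(G)$ means $\mathrm{UNP}(F)\|\mathrm{UNP}(G)$ or $\mathrm{UNP}(F)<\mathrm{UNP}(G)$ or $\mathrm{UNP}(G)<\mathrm{UNP}(F)$. *)

theory Defs
  imports "HOL-Computational_Algebra.Formal_Laurent_Series"
          "HOL-Computational_Algebra.Polynomial"
          "HOL-Library.Extended_Real"
begin

text \<open>R = k((X))[Y] is rendered as the type ('k fls) poly. Orders live in ereal,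
  with ord_X 0 = infinity.\<close>

definition ordX :: "'a::zero fls \<Rightarrow> ereal" where
  "ordX f = (if f = 0 then \<infinity> else ereal (of_int (fls_subdegree f)))"

text \<open>Initial coefficient; for f = 0 this is 0 (the convention inco 0 := 0).\<close>
definition inco :: "'a::zero fls \<Rightarrow> 'a" where
  "inco f = fls_nth f (fls_subdegree f)"

definition jac :: "'a::field fls poly \<Rightarrow> 'a fls poly \<Rightarrow> 'a fls poly" where
  "jac F G = map_poly fls_deriv F * pderiv G - pderiv F * map_poly fls_deriv G"

definition intY :: "'a::zero fls poly \<Rightarrow> ereal" where
  "intY F = ordX (coeff F 0)"

definition root_factorization :: "'a::field fls poly \<Rightarrow> nat \<Rightarrow> 'a fls list \<Rightarrow> bool" where
  "root_factorization F nu zs \<longleftrightarrow> nu > 0 \<and>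
     map_poly (\<lambda>c. fls_compose_power c nu) F =
       smult (fls_compose_power (lead_coeff F) nu) (\<Prod>z\<leftarrow>zs. [:- z, 1:])"

definition rord :: "nat \<Rightarrow> 'a::zero fls \<Rightarrow> ereal" where
  "rord nu z = ordX z / ereal (real nu)"

definition O0 :: "'a::zero fls poly \<Rightarrow> ereal" where
  "O0 F = ordX (lead_coeff F)"

definition root_ords :: "nat \<Rightarrow> 'a::zero fls list \<Rightarrow> ereal set" where
  "root_ords nu zs = set (map (rord nu) zs)"

definition iota :: "nat \<Rightarrow> 'a::zero fls list \<Rightarrow> nat" where
  "iota nu zs = card (root_ords nu zs)"

definition Ord :: "nat \<Rightarrow> 'a::zero fls list \<Rightarrow> nat \<Rightarrow> ereal" where
  "Ord nu zs i = sorted_list_of_set (root_ords nu zs) ! (i - 1)"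

definition Ohat :: "nat \<Rightarrow> 'a::zero fls list \<Rightarrow> ereal" where
  "Ohat nu zs = Ord nu zs (iota nu zs)"

definition Lc :: "nat \<Rightarrow> 'a::zero fls list \<Rightarrow> ereal \<Rightarrow> nat" where
  "Lc nu zs c = length (filter (\<lambda>z. rord nu z \<ge> c) zs)"

definition Li :: "nat \<Rightarrow> 'a::zero fls list \<Rightarrow> nat \<Rightarrow> nat" where
  "Li nu zs i = Lc nu zs (Ord nu zs i)"

definition Lhat :: "nat \<Rightarrow> 'a::zero fls list \<Rightarrow> nat" where
  "Lhat nu zs = Li nu zs (iota nu zs)"

definition Pc :: "'a::comm_ring_1 fls poly \<Rightarrow> nat \<Rightarrow> 'a fls list \<Rightarrow> ereal \<Rightarrow> 'a poly" where
  "Pc F nu zs c =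
     smult (inco (lead_coeff F) * (\<Prod>z\<leftarrow>filter (\<lambda>z. rord nu z < c) zs. inco z))
       ((\<Prod>z\<leftarrow>filter (\<lambda>z. rord nu z = c) zs. [:- inco z, 1:])
        * monom 1 (length (filter (\<lambda>z. rord nu z > c) zs)))"

definition Ppoly :: "'a::comm_ring_1 fls poly \<Rightarrow> nat \<Rightarrow> 'a fls list \<Rightarrow> nat \<Rightarrow> 'a poly" where
  "Ppoly F nu zs i = Pc F nu zs (Ord nu zs i)"

definition related :: "'a::field poly \<Rightarrow> 'a poly \<Rightarrow> bool" where
  "related P Q \<longleftrightarrow> P \<noteq> 0 \<and> Q \<noteq> 0 \<and>
     (\<exists>c. c \<noteq> 0 \<and> P ^ degree Q = smult c (Q ^ degree P))"

definition unp_par_j ::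
  "'a::zero fls poly \<Rightarrow> nat \<Rightarrow> 'a fls list \<Rightarrow> 'a fls poly \<Rightarrow> nat \<Rightarrow> 'a fls list \<Rightarrow> nat \<Rightarrow> bool" where
  "unp_par_j F nu zs G mu ws j \<longleftrightarrow>
     j \<le> min (iota nu zs) (iota mu ws) \<and>
     ereal (real (degree G)) * O0 F = ereal (real (degree F)) * O0 G \<and>
     (\<forall>i. 1 \<le> i \<and> i \<le> j \<longrightarrow>
        Ord nu zs i = Ord mu ws i \<and> degree G * Li nu zs i = degree F * Li mu ws i)"

definition unp_par ::
  "'a::zero fls poly \<Rightarrow> nat \<Rightarrow> 'a fls list \<Rightarrow> 'a fls poly \<Rightarrow> nat \<Rightarrow> 'a fls list \<Rightarrow> bool" where
  "unp_par F nu zs G mu ws \<longleftrightarrow>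
     iota nu zs = iota mu ws \<and> unp_par_j F nu zs G mu ws (iota nu zs)"

definition unp_less ::
  "'a::zero fls poly \<Rightarrow> nat \<Rightarrow> 'a fls list \<Rightarrow> 'a fls poly \<Rightarrow> nat \<Rightarrow> 'a fls list \<Rightarrow> bool" where
  "unp_less F nu zs G mu ws \<longleftrightarrow>
     Ohat nu zs < Ohat mu ws \<and> Lhat mu ws = 1 \<and>
     ((iota nu zs = iota mu ws \<and> unp_par_j F nu zs G mu ws (iota nu zs - 1) \<and>
        degree G * Lhat nu zs = degree F * Lhat mu ws) \<or>
      (iota nu zs + 1 = iota mu ws \<and> unp_par_j F nu zs G mu ws (iota nu zs)))"

definition unp_rel ::
  "'a::zero fls poly \<Rightarrow> nat \<Rightarrow> 'a fls list \<Rightarrow> 'a fls poly \<Rightarrow> nat \<Rightarrow> 'a fls list \<Rightarrow> bool" where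
  "unp_rel F nu zs G mu ws \<longleftrightarrow>
     unp_par F nu zs G mu ws \<or> unp_less F nu zs G mu ws \<or> unp_less G mu ws F nu zs"

end

theory Submission
  imports Defs
begin

text \<open>
  After the substitution \<open>X \<mapsto> X\<^sup>D\<close> for a common ramification index \<open>D\<close>, all roots
  \<open>z\<^sub>i, w\<^sub>e\<close> of \<open>F\<close> and \<open>G\<close> lie in \<open>k((X))\<close>. For an integer level \<open>c\<close> substitute
  \<open>Y = u X\<^sup>c\<close>: the lowest term of \<open>F(X\<^sup>D, u X\<^sup>c)\<close> is \<open>X\<^sup>a \<phi>(u)\<close>, where \<open>\<phi>\<close> is, up to sign,
  the polynomial \<open>P^(F, c/D)\<close>, and likewise \<open>X\<^sup>b \<psi>(u)\<close> for \<open>G\<close>.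
  Because \<open>J(F,G) \<in> k((X))\<close>, the chain rule makes \<open>a \<phi> \<psi>' - b \<phi>' \<psi>\<close> a constant \<open>\<kappa>\<close>.
  If \<open>\<kappa> = 0\<close>, the multiplicities of every root of \<open>\<phi>\<close> and \<open>\<psi>\<close> are in the ratio \<open>a : b\<close>;
  if \<open>\<kappa> \<noteq> 0\<close>, no root of \<open>\<phi> \<psi>\<close> is multiple.

  Below all root orders, \<open>(a, b)\<close> and \<open>(deg \<phi>, deg \<psi>) = (N, M)\<close> are proportional because
  \<open>M O\<^sub>0(F) = N O\<^sub>0(G)\<close>. Climbing the levels, this proportionality survives every level with
  \<open>\<kappa> = 0\<close> (the hypothesis on \<open>int\<close> keeps \<open>a \<noteq> 0\<close>), so at these levels the root orders agree,
  \<open>L\<close> is proportional and the polynomials \<open>P\<close> are related. The climb stops either at the top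
  root order or at the first level with \<open>\<kappa> \<noteq> 0\<close>; there \<open>0\<close> is at most a simple root of \<open>\<phi> \<psi>\<close>,
  so at most one root of \<open>F\<close> or \<open>G\<close> has larger order. This gives the three cases of
  \<open>UNP(F) |.| UNP(G)\<close>.
\<close>

unbundle fps_syntax

section \<open>Weighted Wronskians of polynomials in one variable\<close>

lemma pderiv_linear_power_mult:
  fixes g l :: "'a::idom poly"
  assumes l: "pderiv l = 1"
  shows "l * pderiv (l ^ p * g) = l ^ p * (smult (of_nat p) g + l * pderiv g)"
proof (cases p)
  case 0 then show ?thesis by simp
next
  case (Suc n)
  have "pderiv (l ^ p * g) = l ^ p * pderiv g + g * smult (of_nat p) (l ^ n)"
    using Suc by (simp only: pderiv_mult pderiv_power_Suc l mult_1_right)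
  hence "l * pderiv (l ^ p * g) = l ^ p * (l * pderiv g) + smult (of_nat p) (l * l ^ n) * g"
    by (simp add: algebra_simps)
  also have "l * l ^ n = l ^ p" using Suc by simp
  finally show ?thesis by (simp add: algebra_simps)
qed

lemma weighted_wronskian_factor:
  fixes g h l :: "'a::idom poly"
  assumes l: "pderiv l = 1"
  shows "l * (smult a (l ^ m * g * pderiv (l ^ n * h)) - smult b (pderiv (l ^ m * g) * (l ^ n * h)))
    = l ^ (m + n) * (smult a (g * (smult (of_nat n) h + l * pderiv h))
                     - smult b ((smult (of_nat m) g + l * pderiv g) * h))"
proof -
  have "l * (smult a (l ^ m * g * pderiv (l ^ n * h)) - smult b (pderiv (l ^ m * g) * (l ^ n * h)))
      = smult a (l ^ m * g * (l * pderiv (l ^ n * h))) - smult b ((l * pderiv (l ^ m * g)) * (l ^ n * h))"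
    by (simp add: algebra_simps)
  then show ?thesis
    unfolding pderiv_linear_power_mult[OF l] by (simp add: algebra_simps power_add)
qed

lemma order_add_le_1_if_wronskian_const:
  fixes \<phi> \<psi> :: "'k::field_char_0 poly"
  assumes eq: "smult a (\<phi> * pderiv \<psi>) - smult b (pderiv \<phi> * \<psi>) = [:\<kappa>:]" and \<kappa>: "\<kappa> \<noteq> 0"
  shows "order r \<phi> + order r \<psi> \<le> 1"
proof (rule ccontr)
  assume "\<not> ?thesis"
  then have two: "2 \<le> order r \<phi> + order r \<psi>" by simp
  define l where "l = [:-r, 1::'k:]"
  obtain g where g: "\<phi> = l ^ order r \<phi> * g" using order_1[of r \<phi>] unfolding l_def by (auto elim: dvdE)
  obtain h where h: "\<psi> = l ^ order r \<psi> * h" using order_1[of r \<psi>] unfolding l_def by (auto elim: dvdE)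
  have "pderiv l = 1" unfolding l_def by (simp add: pderiv_pCons)
  from weighted_wronskian_factor[OF this, of a "order r \<phi>" g "order r \<psi>" h b]
  have "l * [:\<kappa>:] = l ^ (order r \<phi> + order r \<psi>) * (smult a (g * (smult (of_nat (order r \<psi>)) h + l * pderiv h))
      - smult b ((smult (of_nat (order r \<phi>)) g + l * pderiv g) * h))"
    unfolding g[symmetric] h[symmetric] eq .
  then have "l ^ 2 dvd l * [:\<kappa>:]"
    using two by (metis dvd_mult2 le_imp_power_dvd)
  moreover have "l \<noteq> 0" unfolding l_def by simp
  ultimately have "l dvd [:\<kappa>:]" by (metis dvd_mult_cancel_left power2_eq_square)
  hence "degree l \<le> degree [:\<kappa>:]" using \<kappa> by (intro dvd_imp_degree_le) auto
  then show False unfolding l_def by simp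
qed

lemma order_proportional_if_wronskian_zero:
  fixes \<phi> \<psi> :: "'k::field_char_0 poly"
  assumes eq: "smult a (\<phi> * pderiv \<psi>) = smult b (pderiv \<phi> * \<psi>)" and nz: "\<phi> \<noteq> 0" "\<psi> \<noteq> 0"
  shows "a * of_nat (order r \<psi>) = b * of_nat (order r \<phi>)"
proof -
  define l where "l = [:-r, 1::'k:]"
  obtain g where g: "\<phi> = l ^ order r \<phi> * g" "\<not> l dvd g"
    using order_decomp[OF nz(1), of r] unfolding l_def by auto
  obtain h where h: "\<psi> = l ^ order r \<psi> * h" "\<not> l dvd h"
    using order_decomp[OF nz(2), of r] unfolding l_def by auto
  have dl: "pderiv l = 1" unfolding l_def by (simp add: pderiv_pCons)
  have "l ^ (order r \<phi> + order r \<psi>) * (smult a (g * (smult (of_nat (order r \<psi>)) h + l * pderiv h))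
      - smult b ((smult (of_nat (order r \<phi>)) g + l * pderiv g) * h)) = 0"
    using weighted_wronskian_factor[OF dl, of a "order r \<phi>" g "order r \<psi>" h b]
    unfolding g(1)[symmetric] h(1)[symmetric] eq by simp
  then have z: "smult a (g * (smult (of_nat (order r \<psi>)) h + l * pderiv h))
      - smult b ((smult (of_nat (order r \<phi>)) g + l * pderiv g) * h) = 0"
    unfolding l_def by simp
  have "poly l r = 0" unfolding l_def by simp
  with arg_cong[OF z, of "\<lambda>p. poly p r"]
  have "(a * of_nat (order r \<psi>) - b * of_nat (order r \<phi>)) * (poly g r * poly h r) = 0"
    by (simp add: algebra_simps)
  moreover have "poly g r \<noteq> 0" "poly h r \<noteq> 0"
    using g(2) h(2) unfolding l_def by (simp_all add: poly_eq_0_iff_dvd)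
  ultimately show ?thesis by simp
qed

lemma eq_smult_if_orders_eq:
  fixes x y :: "'k::field poly"
  assumes alg: "\<forall>p :: 'k poly. degree p > 0 \<longrightarrow> (\<exists>x. poly p x = 0)"
    and "x \<noteq> 0" "y \<noteq> 0" "\<forall>r. order r x = order r y"
  shows "\<exists>c. c \<noteq> 0 \<and> x = smult c y"
  using assms(2-)
proof (induction "degree x" arbitrary: x y)
  case 0
  have "degree y = 0"
  proof (rule ccontr)
    assume "degree y \<noteq> 0"
    then obtain r where "poly y r = 0" using alg by auto
    hence "order r y \<noteq> 0" using 0 order_root by blast
    moreover have "order r x = 0"
    proof (rule order_0I)
      obtain a where "x = [:a:]" using 0 degree0_coeffs by metis
      then show "poly x r \<noteq> 0" using 0 by auto
    qed
    ultimately show False using 0 by simp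
  qed
  then obtain a b where "x = [:a:]" "y = [:b:]" using 0 by (metis degree_0_id)
  then show ?case using 0 by (intro exI[of _ "a / b"]) auto
next
  case (Suc n)
  obtain r where r: "poly x r = 0" using alg Suc(2) by (metis zero_less_Suc)
  have "order r y \<noteq> 0" using Suc r order_root by metis
  hence "poly y r = 0" using order_root by blast
  obtain x1 where x1: "x = [:-r,1:] * x1" using r by (auto simp: poly_eq_0_iff_dvd elim: dvdE)
  obtain y1 where y1: "y = [:-r,1:] * y1" using \<open>poly y r = 0\<close> by (auto simp: poly_eq_0_iff_dvd elim: dvdE)
  have nz: "x1 \<noteq> 0" "y1 \<noteq> 0" using x1 y1 Suc by auto
  have "order s x1 = order s y1" for s
  proof -
    have "order s x = order s [:-r,1:] + order s x1" "order s y = order s [:-r,1:] + order s y1"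
      unfolding x1 y1 using nz by (simp_all only: order_mult mult_eq_0_iff pCons_eq_0_iff one_neq_zero simp_thms)
    then show ?thesis using Suc(5) by simp
  qed
  moreover have "n = degree x1" using Suc(2) nz unfolding x1 by (subst (asm) degree_mult_eq) auto
  ultimately obtain c where "c \<noteq> 0" "x1 = smult c y1" using Suc(1) nz by blast
  then show ?case using x1 y1 by auto
qed

lemma order_power: "p \<noteq> 0 \<Longrightarrow> order r (p ^ n) = n * order r (p :: 'k::idom poly)"
  by (induction n) (auto simp: order_mult)

lemma related_if_orders_proportional:
  fixes P Q :: "'k::field poly"
  assumes alg: "\<forall>p :: 'k poly. degree p > 0 \<longrightarrow> (\<exists>x. poly p x = 0)"
    and nz: "P \<noteq> 0" "Q \<noteq> 0" and o: "\<forall>r. degree Q * order r P = degree P * order r Q"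
  shows "related P Q"
proof -
  have "\<forall>r. order r (P ^ degree Q) = order r (Q ^ degree P)"
    using o nz by (simp add: order_power)
  then obtain c where "c \<noteq> 0" "P ^ degree Q = smult c (Q ^ degree P)"
    using eq_smult_if_orders_eq[OF alg, of "P ^ degree Q" "Q ^ degree P"] nz by auto
  then show ?thesis unfolding related_def using nz by auto
qed

lemma related_smult:
  fixes P Q :: "'a::field poly"
  assumes "related P Q" "a \<noteq> 0" "b \<noteq> 0"
  shows "related (smult a P) (smult b Q)"
proof -
  obtain c where c: "c \<noteq> 0" "P ^ degree Q = smult c (Q ^ degree P)" using assms(1) unfolding related_def by auto
  have "smult a P ^ degree (smult b Q) = smult (a ^ degree Q * c / b ^ degree P) (smult b Q ^ degree (smult a P))"
    using c assms(2,3) by (simp add: smult_power)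
  moreover have "a ^ degree Q * c / b ^ degree P \<noteq> 0" using assms c by simp
  moreover have "smult a P \<noteq> 0" "smult b Q \<noteq> 0" using assms unfolding related_def by auto
  ultimately show ?thesis unfolding related_def by blast
qed

lemma related_sym: "related P Q \<Longrightarrow> related Q (P :: 'a::field poly)"
proof -
  assume "related P Q"
  then obtain c where c: "c \<noteq> 0" "P ^ degree Q = smult c (Q ^ degree P)" "P \<noteq> 0" "Q \<noteq> 0"
    unfolding related_def by auto
  then have "Q ^ degree P = smult (1 / c) (P ^ degree Q)" by simp
  moreover have "1 / c \<noteq> 0" using c by simp
  ultimately show "related Q P" using c unfolding related_def by blast
qed

section \<open>Initial forms under the substitution \<open>Y = u X\<^sup>c\<close>\<close>

lemma fls_times_nth_lowest:
  fixes f g :: "'a::idom fls"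
  assumes f: "\<And>n. n < p \<Longrightarrow> f $$ n = 0" and g: "\<And>n. n < q \<Longrightarrow> g $$ n = 0"
  shows "(f * g) $$ (p + q) = f $$ p * g $$ q" and "n < p + q \<Longrightarrow> (f * g) $$ n = 0"
proof -
  have A: "(f * g) $$ (p + q) = f $$ p * g $$ q \<and> (n < p + q \<longrightarrow> (f * g) $$ n = 0)"
  proof (cases "f = 0 \<or> g = 0")
    case True then show ?thesis by auto
  next
    case False
    have df: "p \<le> fls_subdegree f" using False f by (intro fls_subdegree_geI) auto
    have dg: "q \<le> fls_subdegree g" using False g by (intro fls_subdegree_geI) auto
    have low: "(f * g) $$ n = 0" if "n < p + q" for n
      using that df dg by (intro fls_times_nth_eq0) simp
    show ?thesis
    proof (cases "fls_subdegree f = p \<and> fls_subdegree g = q")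
      case True then show ?thesis using low fls_times_base[of f g] by auto
    next
      case F2: False
      then have "f $$ p = 0 \<or> g $$ q = 0"
        using df dg fls_subdegree_leI[of f p] fls_subdegree_leI[of g q] by force
      moreover have "(f * g) $$ (p + q) = 0" using F2 df dg by (intro fls_times_nth_eq0) auto
      ultimately show ?thesis using low by auto
    qed
  qed
  then show "(f * g) $$ (p + q) = f $$ p * g $$ q" by blast
  show "n < p + q \<Longrightarrow> (f * g) $$ n = 0" using A by blast
qed

lemma fls_deriv_poly_eval:
  fixes F :: "'a::field_char_0 fls poly"
  shows "fls_deriv (poly F e) = poly (map_poly fls_deriv F) e + fls_deriv e * poly (pderiv F) e"
proof (induction F)
  case 0 then show ?case by simp
next
  case (pCons a p)
  have m: "map_poly fls_deriv (pCons a p) = pCons (fls_deriv a) (map_poly fls_deriv p)"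
    by (simp add: map_poly_pCons)
  show ?case unfolding m using pCons(2) by (simp add: pderiv_pCons algebra_simps)
qed

lemma jac_const_chain_rule:
  fixes F G :: "'a::field_char_0 fls poly"
  assumes "degree (jac F G) = 0"
  shows "fls_deriv (poly F e) * poly (pderiv G) e - poly (pderiv F) e * fls_deriv (poly G e)
         = coeff (jac F G) 0"
proof -
  have "poly (jac F G) e = coeff (jac F G) 0" using assms by (metis degree_0_id poly_pCons mult_zero_right add_0_right poly_0)
  moreover have "poly (jac F G) e = poly (map_poly fls_deriv F) e * poly (pderiv G) e
      - poly (pderiv F) e * poly (map_poly fls_deriv G) e" unfolding jac_def by simp
  ultimately show ?thesis unfolding fls_deriv_poly_eval by (simp add: algebra_simps)
qed

text \<open>The coefficient of \<open>X\<^sup>n\<close> in \<open>H(X, u X\<^sup>c)\<close>, as a polynomial in \<open>u\<close>.\<close>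

definition weighted_coeff :: "int \<Rightarrow> int \<Rightarrow> 'a::comm_monoid_add fls poly \<Rightarrow> 'a poly" where
  "weighted_coeff c n H = (\<Sum>j\<le>degree H. monom (coeff H j $$ (n - c * int j)) j)"

lemma coeff_weighted_coeff: "coeff (weighted_coeff c n H) j = coeff H j $$ (n - c * int j)"
  unfolding weighted_coeff_def by (auto simp: coeff_sum coeff_monom coeff_eq_0)

lemma fls_shift_const_power:
  fixes u :: "'a::comm_ring_1"
  shows "(fls_shift (-c) (fls_const u)) ^ j = fls_shift (- (c * int j)) (fls_const (u ^ j))"
proof (induction j)
  case 0 then show ?case by simp
next
  case (Suc j)
  have "fls_shift (-c) (fls_const u) * fls_shift (- (c * int j)) (fls_const (u ^ j))
      = fls_shift (- (c * int (Suc j))) (fls_const u * fls_const (u ^ j))"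
    by (simp add: fls_shifted_times_simps algebra_simps)
  then show ?case using Suc by (simp add: fls_const_mult_const mult.commute)
qed

lemma poly_weighted_coeff:
  "poly (weighted_coeff c n H) u = poly H (fls_shift (-c) (fls_const (u::'a::field))) $$ n"
proof -
  have "poly H (fls_shift (-c) (fls_const u)) = (\<Sum>j\<le>degree H. coeff H j * (fls_shift (-c) (fls_const u)) ^ j)"
    by (simp add: poly_altdef)
  hence "poly H (fls_shift (-c) (fls_const u)) $$ n = (\<Sum>j\<le>degree H. coeff H j $$ (n - c * int j) * u ^ j)"
    by (simp add: fls_nth_sum fls_shift_const_power fls_shifted_times_simps
        mult.commute[of "coeff H _"] mult.commute[of "u ^ _"])
  moreover have "poly (weighted_coeff c n H) u = (\<Sum>j\<le>degree H. coeff H j $$ (n - c * int j) * u ^ j)"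
    unfolding weighted_coeff_def by (simp add: poly_sum poly_monom)
  ultimately show ?thesis by simp
qed

lemma weighted_coeff_pderiv:
  "weighted_coeff c n (pderiv H) = pderiv (weighted_coeff c (n + c) (H :: 'a::field_char_0 fls poly))"
proof (rule poly_eqI)
  fix j
  have "coeff (weighted_coeff c n (pderiv H)) j = (of_nat (Suc j) * coeff H (Suc j)) $$ (n - c * int j)"
    by (simp add: coeff_weighted_coeff coeff_pderiv)
  also have "\<dots> = of_nat (Suc j) * coeff H (Suc j) $$ (n - c * int j)"
    by (rule fls_mult_of_nat_nth)
  also have "\<dots> = coeff (pderiv (weighted_coeff c (n + c) H)) j"
    by (simp add: coeff_pderiv coeff_weighted_coeff algebra_simps)
  finally show "coeff (weighted_coeff c n (pderiv H)) j = coeff (pderiv (weighted_coeff c (n + c) H)) j" .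
qed

definition initial_form :: "int \<Rightarrow> 'a::comm_monoid_add fls poly \<Rightarrow> int \<Rightarrow> 'a poly \<Rightarrow> bool" where
  "initial_form c H \<alpha> \<phi> \<longleftrightarrow> (\<forall>n<\<alpha>. weighted_coeff c n H = 0) \<and> weighted_coeff c \<alpha> H = \<phi>"

lemma initial_form_nth:
  fixes H :: "'a::field_char_0 fls poly"
  assumes "initial_form c H \<alpha> \<phi>"
  shows "n < \<alpha> \<Longrightarrow> poly H (fls_shift (-c) (fls_const u)) $$ n = 0"
    and "poly H (fls_shift (-c) (fls_const u)) $$ \<alpha> = poly \<phi> u"
  using assms unfolding initial_form_def by (auto simp flip: poly_weighted_coeff)

lemma initial_form_mult:
  fixes F G :: "'a::field_char_0 fls poly"
  assumes F: "initial_form c F \<alpha> \<phi>" and G: "initial_form c G \<beta> \<psi>"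
  shows "initial_form c (F * G) (\<alpha> + \<beta>) (\<phi> * \<psi>)"
  unfolding initial_form_def
proof (intro conjI allI impI)
  fix n assume n: "n < \<alpha> + \<beta>"
  show "weighted_coeff c n (F * G) = 0"
  proof (rule poly_ext)
    fix u
    show "poly (weighted_coeff c n (F * G)) u = poly 0 u"
      unfolding poly_weighted_coeff poly_mult
      using fls_times_nth_lowest(2)[OF initial_form_nth(1)[OF F] initial_form_nth(1)[OF G] n] by simp
  qed
next
  show "weighted_coeff c (\<alpha> + \<beta>) (F * G) = \<phi> * \<psi>"
  proof (rule poly_ext)
    fix u
    show "poly (weighted_coeff c (\<alpha> + \<beta>) (F * G)) u = poly (\<phi> * \<psi>) u"
      unfolding poly_weighted_coeff poly_mult
      using fls_times_nth_lowest(1)[OF initial_form_nth(1)[OF F] initial_form_nth(1)[OF G]]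
        initial_form_nth(2)[OF F] initial_form_nth(2)[OF G] by simp
  qed
qed

lemma initial_form_const:
  fixes a :: "'a::field_char_0 fls"
  assumes "a \<noteq> 0"
  shows "initial_form c [:a:] (fls_subdegree a) [:inco a:]"
  unfolding initial_form_def
proof (intro conjI allI impI)
  fix n assume "n < fls_subdegree a"
  then show "weighted_coeff c n [:a:] = 0"
    by (intro poly_eqI) (auto simp: coeff_weighted_coeff coeff_pCons split: nat.splits)
next
  show "weighted_coeff c (fls_subdegree a) [:a:] = [:inco a:]"
    by (intro poly_eqI) (auto simp: coeff_weighted_coeff coeff_pCons inco_def split: nat.splits)
qed

definition lin_order :: "int \<Rightarrow> 'a::zero fls \<Rightarrow> int" where
  "lin_order c z = (if z \<noteq> 0 \<and> fls_subdegree z < c then fls_subdegree z else c)"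

definition lin_form :: "int \<Rightarrow> 'a::comm_ring_1 fls \<Rightarrow> 'a poly" where
  "lin_form c z = (if z \<noteq> 0 \<and> fls_subdegree z < c then [:- inco z:]
     else if z \<noteq> 0 \<and> fls_subdegree z = c then [:- inco z, 1:] else [:0, 1:])"

lemma coeff_weighted_coeff_linear: "coeff (weighted_coeff c n [:-z, 1:]) j =
   (if j = 0 then - (z $$ n) else if j = 1 then (if n = c then 1 else 0) else 0)"
  for z :: "'a::comm_ring_1 fls"
  by (auto simp: coeff_weighted_coeff coeff_pCons split: nat.splits)

lemma initial_form_linear:
  fixes z :: "'a::field_char_0 fls"
  shows "initial_form c [:-z, 1:] (lin_order c z) (lin_form c z)"
  unfolding initial_form_def
proof (intro conjI allI impI)
  fix n assume n: "n < lin_order c z"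
  have "z $$ n = 0"
  proof (cases "z = 0")
    case False
    then have "n < fls_subdegree z" using n unfolding lin_order_def by (auto split: if_splits)
    then show ?thesis by (simp add: nth_less_subdegree_zero)
  qed simp
  moreover have "n \<noteq> c" using n unfolding lin_order_def by (auto split: if_splits)
  ultimately show "weighted_coeff c n [:-z, 1:] = 0"
    by (intro poly_eqI) (simp add: coeff_weighted_coeff_linear)
next
  show "weighted_coeff c (lin_order c z) [:-z, 1:] = lin_form c z"
  proof (cases "z \<noteq> 0 \<and> fls_subdegree z < c")
    case True
    then have "lin_order c z = fls_subdegree z" "lin_form c z = [:- inco z:]" unfolding lin_order_def lin_form_def by auto
    then show ?thesis using True
      by (intro poly_eqI) (simp add: coeff_weighted_coeff_linear inco_def coeff_pCons split: nat.split)
  next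
    case F: False
    show ?thesis
    proof (cases "z \<noteq> 0 \<and> fls_subdegree z = c")
      case True
      then have "lin_order c z = c" "lin_form c z = [:- inco z, 1:]" unfolding lin_order_def lin_form_def by auto
      then show ?thesis using True
        by (intro poly_eqI) (simp add: coeff_weighted_coeff_linear inco_def coeff_pCons split: nat.split)
    next
      case False
      then have "lin_order c z = c" "lin_form c z = [:0, 1:]" using F unfolding lin_order_def lin_form_def by auto
      moreover have "z $$ c = 0"
      proof (cases "z = 0")
        case False
        then have "c < fls_subdegree z" using F \<open>\<not> (z \<noteq> 0 \<and> fls_subdegree z = c)\<close> by auto
        then show ?thesis by (simp add: nth_less_subdegree_zero)
      qed simp
      ultimately show ?thesis
        by (intro poly_eqI) (simp add: coeff_weighted_coeff_linear coeff_pCons split: nat.split)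
    qed
  qed
qed

lemma initial_form_prod:
  fixes zs :: "'a::field_char_0 fls list"
  shows "initial_form c (\<Prod>z\<leftarrow>zs. [:-z, 1:]) (\<Sum>z\<leftarrow>zs. lin_order c z) (\<Prod>z\<leftarrow>zs. lin_form c z)"
proof (induction zs)
  case Nil
  have "initial_form c [:1:] (fls_subdegree (1::'a fls)) [:inco (1::'a fls):]"
    by (rule initial_form_const) simp
  moreover have "inco (1::'a fls) = 1" by (simp add: inco_def)
  ultimately show ?case by (simp add: one_pCons)
next
  case (Cons a zs)
  then show ?case using initial_form_mult[OF initial_form_linear Cons] by simp
qed

lemma initial_form_factored:
  fixes A :: "'a::field_char_0 fls"
  assumes "A \<noteq> 0"
  shows "initial_form c (smult A (\<Prod>z\<leftarrow>zs. [:-z, 1:]))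
     (fls_subdegree A + (\<Sum>z\<leftarrow>zs. lin_order c z)) ([:inco A:] * (\<Prod>z\<leftarrow>zs. lin_form c z))"
  using initial_form_mult[OF initial_form_const[OF assms] initial_form_prod] by simp

lemma initial_form_pderiv:
  fixes H :: "'a::field_char_0 fls poly"
  assumes "initial_form c H \<alpha> \<phi>"
  shows "initial_form c (pderiv H) (\<alpha> - c) (pderiv \<phi>)"
  using assms unfolding initial_form_def by (simp add: weighted_coeff_pderiv)

text \<open>Along \<open>Y = e = u X\<^sup>c\<close> the chain rule gives \<open>f' G\<^sub>Y(X, e) - F\<^sub>Y(X, e) g' = J(F,G)\<close> for
  \<open>f = F(X, e)\<close>, \<open>g = G(X, e)\<close>; the lowest coefficients on the left involve only the initial forms.\<close>

lemma initial_forms_wronskian_const: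
  fixes F G :: "'a::field_char_0 fls poly"
  assumes J: "degree (jac F G) = 0" and F: "initial_form c F \<alpha> \<phi>" and G: "initial_form c G \<beta> \<psi>"
  shows "\<exists>\<kappa>. smult (of_int \<alpha>) (\<phi> * pderiv \<psi>) - smult (of_int \<beta>) (pderiv \<phi> * \<psi>) = [:\<kappa>:]"
proof -
  define \<kappa> where "\<kappa> = coeff (jac F G) 0 $$ (\<alpha> + \<beta> - c - 1)"
  have "smult (of_int \<alpha>) (\<phi> * pderiv \<psi>) - smult (of_int \<beta>) (pderiv \<phi> * \<psi>) = [:\<kappa>:]"
  proof (rule poly_ext)
    fix u
    define e where "e = fls_shift (-c) (fls_const (u::'a))"
    note F' = initial_form_nth[OF F, where u = u, folded e_def]
      and G' = initial_form_nth[OF G, where u = u, folded e_def]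
      and dF = initial_form_nth[OF initial_form_pderiv[OF F], where u = u, folded e_def]
      and dG = initial_form_nth[OF initial_form_pderiv[OF G], where u = u, folded e_def]
    have dF0: "n < \<alpha> - 1 \<Longrightarrow> fls_deriv (poly F e) $$ n = 0"
      and dG0: "n < \<beta> - 1 \<Longrightarrow> fls_deriv (poly G e) $$ n = 0" for n
      using F'(1) G'(1) by simp_all
    have "(fls_deriv (poly F e) * poly (pderiv G) e) $$ ((\<alpha> - 1) + (\<beta> - c))
        = of_int \<alpha> * poly \<phi> u * poly (pderiv \<psi>) u"
      using fls_times_nth_lowest(1)[OF dF0 dG(1)]
      by (simp add: F'(2) dG(2))
    moreover have "(poly (pderiv F) e * fls_deriv (poly G e)) $$ ((\<alpha> - c) + (\<beta> - 1))
        = poly (pderiv \<phi>) u * (of_int \<beta> * poly \<psi> u)"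
      using fls_times_nth_lowest(1)[OF dF(1) dG0]
      by (simp add: G'(2) dF(2))
    moreover have "(fls_deriv (poly F e) * poly (pderiv G) e - poly (pderiv F) e * fls_deriv (poly G e))
        $$ (\<alpha> + \<beta> - c - 1) = \<kappa>"
      unfolding \<kappa>_def jac_const_chain_rule[OF J] ..
    ultimately show "poly (smult (of_int \<alpha>) (\<phi> * pderiv \<psi>) - smult (of_int \<beta>) (pderiv \<phi> * \<psi>)) u
        = poly [:\<kappa>:] u"
      by (simp add: algebra_simps)
  qed
  then show ?thesis by blast
qed

section \<open>Level forms of a factored polynomial\<close>

lemma inco_nonzero: "z \<noteq> 0 \<Longrightarrow> inco (z :: 'a::zero fls) \<noteq> 0"
  unfolding inco_def by (simp add: nth_fls_subdegree_nonzero)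

text \<open>For roots of the ramified polynomial, level \<open>c\<close> stands for the root order \<open>c / D\<close>:
  \<open>level_form\<close> is \<open>\<plusminus>P^(F, c/D)\<close> and \<open>count_ge\<close> is \<open>L(F, c/D)\<close>
  (\<open>level_form_eq_Pc\<close>, \<open>Lc_level_ord\<close>).\<close>

definition level_order :: "'a::zero fls \<Rightarrow> 'a fls list \<Rightarrow> int \<Rightarrow> int" where
  "level_order A zs c = fls_subdegree A + (\<Sum>z\<leftarrow>zs. lin_order c z)"

definition level_form :: "'a::comm_ring_1 fls \<Rightarrow> 'a fls list \<Rightarrow> int \<Rightarrow> 'a poly" where
  "level_form A zs c = [:inco A:] * (\<Prod>z\<leftarrow>zs. lin_form c z)"

definition count_ge :: "'a::zero fls list \<Rightarrow> int \<Rightarrow> nat" where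
  "count_ge zs c = length (filter (\<lambda>z. z = 0 \<or> c \<le> fls_subdegree z) zs)"

definition count_gt :: "'a::zero fls list \<Rightarrow> int \<Rightarrow> nat" where
  "count_gt zs c = length (filter (\<lambda>z. z = 0 \<or> c < fls_subdegree z) zs)"

definition count_eq :: "'a::zero fls list \<Rightarrow> int \<Rightarrow> nat" where
  "count_eq zs c = length (filter (\<lambda>z. z \<noteq> 0 \<and> fls_subdegree z = c) zs)"

definition count_root :: "'a::zero fls list \<Rightarrow> int \<Rightarrow> 'a \<Rightarrow> nat" where
  "count_root zs c r = length (filter (\<lambda>z. z \<noteq> 0 \<and> fls_subdegree z = c \<and> inco z = r) zs)"

lemma lin_form_nonzero: "lin_form c (z :: 'a::field fls) \<noteq> 0"
  unfolding lin_form_def using inco_nonzero[of z] by auto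

lemma level_form_nonzero: "A \<noteq> 0 \<Longrightarrow> level_form A (zs :: 'a::field fls list) c \<noteq> 0"
  unfolding level_form_def using inco_nonzero[of A] lin_form_nonzero by (induction zs) auto

lemma order_linear: "order r [:-a, 1:] = (if a = r then 1 else (0::nat))"
  for a :: "'a::idom"
proof (cases "a = r")
  case True then show ?thesis using order_power_n_n[of r 1] by simp
next
  case False
  then have "poly [:-a, 1:] r \<noteq> 0" by simp
  then show ?thesis using False by (simp add: order_0I)
qed

lemma order_lin_form: "order r (lin_form c z) =
   (if z \<noteq> 0 \<and> fls_subdegree z = c \<and> inco z = r then 1 else 0) +
   (if r = 0 \<and> (z = 0 \<or> c < fls_subdegree z) then 1 else (0::nat))"
  for z :: "'a::field fls"
proof -
  consider "z \<noteq> 0 \<and> fls_subdegree z < c" | "z \<noteq> 0 \<and> fls_subdegree z = c" | "z = 0 \<or> c < fls_subdegree z"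
    by force
  then show ?thesis
  proof cases
    case 1 then show ?thesis unfolding lin_form_def using inco_nonzero[of z] by (auto intro: order_0I)
  next
    case 2 then show ?thesis unfolding lin_form_def using inco_nonzero[of z] order_linear[of r "inco z"] by auto
  next
    case 3
    then have "lin_form c z = [:-0, 1:]" unfolding lin_form_def by auto
    then show ?thesis using 3 order_linear[of r 0] by auto
  qed
qed

lemma order_level_form:
  "A \<noteq> 0 \<Longrightarrow> order r (level_form A zs c) = count_root zs c r + (if r = 0 then count_gt zs c else 0)"
  for zs :: "'a::field fls list"
proof (induction zs)
  case Nil
  then show ?case unfolding level_form_def count_root_def count_gt_def using inco_nonzero[of A]
    by (auto intro: order_0I)
next
  case (Cons a zs)
  have "level_form A (a # zs) c = lin_form c a * level_form A zs c" unfolding level_form_def by (simp add: algebra_simps)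
  then have "order r (level_form A (a # zs) c) = order r (lin_form c a) + order r (level_form A zs c)"
    using lin_form_nonzero level_form_nonzero[OF Cons(2)] by (metis order_mult mult_eq_0_iff)
  then show ?case using Cons unfolding order_lin_form count_root_def count_gt_def by auto
qed

lemma degree_level_form: "A \<noteq> 0 \<Longrightarrow> degree (level_form A zs c) = count_ge zs c"
  for zs :: "'a::field fls list"
proof (induction zs)
  case Nil
  then show ?case unfolding level_form_def count_ge_def by simp
next
  case (Cons a zs)
  have "level_form A (a # zs) c = lin_form c a * level_form A zs c" unfolding level_form_def by (simp add: algebra_simps)
  then have "degree (level_form A (a # zs) c) = degree (lin_form c a) + degree (level_form A zs c)"
    using lin_form_nonzero level_form_nonzero[OF Cons(2)] by (metis degree_mult_eq)
  moreover have "degree (lin_form c a) = (if a = 0 \<or> c \<le> fls_subdegree a then 1 else 0)"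
    unfolding lin_form_def by auto
  ultimately show ?case using Cons unfolding count_ge_def by auto
qed

lemma lin_order_succ:
  "lin_order (c + 1) z = lin_order c z + (if z = 0 \<or> c + 1 \<le> fls_subdegree z then 1 else 0)"
  unfolding lin_order_def by auto

lemma level_order_succ: "level_order A zs (c + 1) = level_order A zs c + int (count_ge zs (c + 1))"
  unfolding level_order_def count_ge_def
  by (induction zs) (auto simp: lin_order_succ)

lemma count_gt_eq_count_ge_succ: "count_gt zs c = count_ge zs (c + 1)"
  unfolding count_gt_def count_ge_def by (simp add: add1_zle_eq)

lemma count_ge_split: "count_ge zs c = count_gt zs c + count_eq zs c"
  unfolding count_ge_def count_gt_def count_eq_def by (induction zs) auto

lemma level_data_below_roots:
  assumes "\<forall>z\<in>set zs. z \<noteq> 0 \<longrightarrow> c \<le> fls_subdegree z"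
  shows "count_ge zs c = length zs" "level_order A zs c = fls_subdegree A + int (length zs) * c"
  using assms unfolding count_ge_def level_order_def lin_order_def
  by (induction zs) (auto simp: algebra_simps)

lemma level_order_le:
  "\<forall>z\<in>set zs. z \<noteq> 0 \<Longrightarrow> level_order A zs c \<le> fls_subdegree A + (\<Sum>z\<leftarrow>zs. fls_subdegree z)"
  unfolding level_order_def lin_order_def
  by (induction zs) (auto intro: add_mono)

lemma level_order_above_roots:
  "\<forall>z\<in>set zs. z \<noteq> 0 \<and> fls_subdegree z \<le> c \<Longrightarrow>
     level_order A zs c = fls_subdegree A + (\<Sum>z\<leftarrow>zs. fls_subdegree z)"
  unfolding level_order_def lin_order_def
  by (induction zs) auto

section \<open>Climbing the levels\<close>

definition level_wronskian :: "'a::idom fls \<Rightarrow> 'a fls list \<Rightarrow> 'a fls \<Rightarrow> 'a fls list \<Rightarrow> int \<Rightarrow> 'a poly" where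
  "level_wronskian A zs B ws c =
     smult (of_int (level_order A zs c)) (level_form A zs c * pderiv (level_form B ws c))
     - smult (of_int (level_order B ws c)) (pderiv (level_form A zs c) * level_form B ws c)"

definition proportional_level :: "'a::zero fls \<Rightarrow> 'a fls list \<Rightarrow> 'a fls \<Rightarrow> 'a fls list \<Rightarrow> int \<Rightarrow> bool" where
  "proportional_level A zs B ws c \<longleftrightarrow>
     int (length ws) * level_order A zs c = int (length zs) * level_order B ws c \<and>
     length ws * count_ge zs c = length zs * count_ge ws c"

text \<open>The three shapes of the level where the climb stops; they become the three cases of
  \<open>UNP(F) |.| UNP(G)\<close>.\<close>

definition terminal_level :: "'a::zero fls list \<Rightarrow> 'a fls list \<Rightarrow> int \<Rightarrow> bool" where
  "terminal_level zs ws c \<longleftrightarrow>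
     (count_gt zs c = 0 \<and> count_eq zs c > 0 \<and> count_gt ws c = 0 \<and> count_eq ws c > 0) \<or>
     (count_gt zs c = 1 \<and> count_gt ws c = 0 \<and> count_eq ws c > 0) \<or>
     (count_gt ws c = 1 \<and> count_gt zs c = 0 \<and> count_eq zs c > 0)"

lemma count_root_0: "count_root zs c 0 = 0"
  unfolding count_root_def using inco_nonzero by (induction zs) auto

lemma orders_proportional_if_level_wronskian_eq_0:
  fixes A B :: "'a::field_char_0 fls"
  assumes AB: "A \<noteq> 0" "B \<noteq> 0" and P: "proportional_level A zs B ws c"
    and W: "level_wronskian A zs B ws c = 0" and nz: "level_order A zs c \<noteq> 0"
  shows "length zs * order r (level_form B ws c) = length ws * order r (level_form A zs c)"
proof -
  let ?a = "level_order A zs c" and ?b = "level_order B ws c"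
  have "smult (of_int ?a) (level_form A zs c * pderiv (level_form B ws c))
      = smult (of_int ?b) (pderiv (level_form A zs c) * level_form B ws c)"
    using W unfolding level_wronskian_def by simp
  from order_proportional_if_wronskian_zero[OF this level_form_nonzero[OF AB(1)] level_form_nonzero[OF AB(2)]]
  have "(of_int (?a * int (order r (level_form B ws c))) :: 'a) = of_int (?b * int (order r (level_form A zs c)))"
    by simp
  then have o: "?a * int (order r (level_form B ws c)) = ?b * int (order r (level_form A zs c))"
    by (simp only: of_int_eq_iff)
  have "int (length ws) * ?a = int (length zs) * ?b" using P unfolding proportional_level_def by simp
  with o have "?a * (int (length zs) * order r (level_form B ws c)) = ?a * (int (length ws) * order r (level_form A zs c))"
    by (metis mult.left_commute mult.assoc)
  then show ?thesis using nz by (simp flip: of_nat_mult)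
qed

lemma proportional_level_succ:
  fixes A B :: "'a::field fls"
  assumes AB: "A \<noteq> 0" "B \<noteq> 0" and P: "proportional_level A zs B ws c"
    and o: "length zs * order 0 (level_form B ws c) = length ws * order 0 (level_form A zs c)"
  shows "proportional_level A zs B ws (c + 1)"
proof -
  have "length zs * count_gt ws c = length ws * count_gt zs c"
    using o unfolding order_level_form[OF AB(1)] order_level_form[OF AB(2)] count_root_0 by simp
  then show ?thesis using P unfolding proportional_level_def level_order_succ count_gt_eq_count_ge_succ
    by (simp add: algebra_simps) (metis of_nat_mult)
qed

lemma orders_proportional_below_roots:
  fixes A B :: "'a::field fls"
  assumes AB: "A \<noteq> 0" "B \<noteq> 0"
    and below: "\<forall>z\<in>set zs \<union> set ws. z \<noteq> 0 \<longrightarrow> c < fls_subdegree z"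
  shows "length zs * order r (level_form B ws c) = length ws * order r (level_form A zs c)"
proof -
  have "count_root xs c r = 0" "count_gt xs c = length xs" if "set xs \<subseteq> set zs \<union> set ws" for xs
    using that below unfolding count_root_def count_gt_def by (induction xs) auto
  then show ?thesis unfolding order_level_form[OF AB(1)] order_level_form[OF AB(2)] by simp
qed

lemma order_add_le_1_if_level_wronskian_nonzero:
  fixes A B :: "'a::field_char_0 fls"
  assumes J: "\<exists>\<kappa>. level_wronskian A zs B ws c = [:\<kappa>:]" and nz: "level_wronskian A zs B ws c \<noteq> 0"
  shows "order r (level_form A zs c) + order r (level_form B ws c) \<le> 1"
proof -
  obtain \<kappa> where k: "level_wronskian A zs B ws c = [:\<kappa>:]" using J by blast
  with nz have "\<kappa> \<noteq> 0" by auto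
  with k show ?thesis unfolding level_wronskian_def by (rule order_add_le_1_if_wronskian_const)
qed

lemma level_wronskian_eq_0_if_count_ge_0:
  fixes A B :: "'a::field_char_0 fls"
  assumes AB: "A \<noteq> 0" "B \<noteq> 0" and "count_ge zs c = 0" "count_ge ws c = 0"
  shows "level_wronskian A zs B ws c = 0"
proof -
  have "pderiv (level_form A zs c) = 0" "pderiv (level_form B ws c) = 0"
    using assms degree_level_form[OF AB(1), of zs c] degree_level_form[OF AB(2), of ws c] pderiv_eq_0_iff by auto
  then show ?thesis unfolding level_wronskian_def by simp
qed

text \<open>A nonzero constant Wronskian leaves no multiple root of the product of the two level forms,
  so \<open>0\<close> is at most a simple root: at most one root of either factorization has order beyond \<open>c\<close>.\<close>

lemma terminal_level_if_level_wronskian_nonzero: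
  fixes A B :: "'a::field_char_0 fls"
  assumes AB: "A \<noteq> 0" "B \<noteq> 0" and ne: "zs \<noteq> []" "ws \<noteq> []"
    and J: "\<exists>\<kappa>. level_wronskian A zs B ws c = [:\<kappa>:]"
    and P: "proportional_level A zs B ws c" and nz: "level_wronskian A zs B ws c \<noteq> 0"
  shows "terminal_level zs ws c"
proof -
  have gt: "count_gt zs c + count_gt ws c \<le> 1"
    using order_add_le_1_if_level_wronskian_nonzero[OF J nz, of 0]
    unfolding order_level_form[OF AB(1)] order_level_form[OF AB(2)] count_root_0 by simp
  have "count_ge zs c > 0 \<and> count_ge ws c > 0"
  proof (rule ccontr)
    assume "\<not> ?thesis"
    then have "count_ge zs c = 0 \<and> count_ge ws c = 0"
      using P ne unfolding proportional_level_def by (metis mult_is_0 length_0_conv neq0_conv)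
    then show False using level_wronskian_eq_0_if_count_ge_0[OF AB] nz by blast
  qed
  then have "count_gt zs c = 0 \<Longrightarrow> count_eq zs c > 0" "count_gt ws c = 0 \<Longrightarrow> count_eq ws c > 0"
    using count_ge_split[of zs c] count_ge_split[of ws c] by simp_all
  with gt show ?thesis unfolding terminal_level_def by (cases "count_gt zs c"; cases "count_gt ws c") auto
qed

lemma terminal_level_if_last_roots:
  assumes ne: "zs \<noteq> []" "ws \<noteq> []"
    and P: "proportional_level A zs B ws c" "proportional_level A zs B ws (c + 1)"
    and last: "count_gt zs c = 0" "count_eq zs c > 0"
  shows "terminal_level zs ws c"
proof -
  have gt: "count_gt ws c = 0"
    using P(2) last(1) ne unfolding proportional_level_def count_gt_eq_count_ge_succ by (metis mult_is_0 length_0_conv)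
  have "count_ge zs c > 0" using count_ge_split[of zs c] last by simp
  then have "count_ge ws c > 0"
    using P(1) ne unfolding proportional_level_def by (metis mult_is_0 length_0_conv neq0_conv)
  then show ?thesis using gt last count_ge_split[of ws c] unfolding terminal_level_def by simp
qed

lemma fls_subdegree_bounds:
  fixes xs :: "'a::zero fls list"
  obtains cl ch where "\<forall>z\<in>set xs. z \<noteq> 0 \<longrightarrow> cl \<le> fls_subdegree z \<and> fls_subdegree z < ch"
proof -
  define S where "S = insert 0 (fls_subdegree ` set xs)"
  have "finite S" unfolding S_def by simp
  then have "\<forall>z\<in>set xs. Min S \<le> fls_subdegree z \<and> fls_subdegree z < Max S + 1"
    unfolding S_def by (auto simp: Min_le Max_ge order.strict_trans1[OF Max_ge])
  then show thesis using that by blast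
qed

context
  fixes A B :: "'a::field_char_0 fls" and zs ws :: "'a fls list"
  assumes AB: "A \<noteq> 0" "B \<noteq> 0" and ne: "zs \<noteq> []" "ws \<noteq> []"
    and J: "degree (jac (smult A (\<Prod>z\<leftarrow>zs. [:-z,1:])) (smult B (\<Prod>w\<leftarrow>ws. [:-w,1:]))) = 0"
    and par: "int (length ws) * fls_subdegree A = int (length zs) * fls_subdegree B"
    and neg: "((\<forall>z\<in>set zs. z \<noteq> 0) \<and> fls_subdegree A + (\<Sum>z\<leftarrow>zs. fls_subdegree z) < 0) \<or>
              ((\<forall>w\<in>set ws. w \<noteq> 0) \<and> fls_subdegree B + (\<Sum>w\<leftarrow>ws. fls_subdegree w) < 0)"
begin

lemma level_wronskian_const: "\<exists>\<kappa>. level_wronskian A zs B ws c = [:\<kappa>:]"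
  using initial_forms_wronskian_const[OF J initial_form_factored[OF AB(1)] initial_form_factored[OF AB(2)]]
  unfolding level_wronskian_def level_order_def level_form_def .

lemma level_order_nonzero:
  assumes "proportional_level A zs B ws c"
  shows "level_order A zs c \<noteq> 0"
proof -
  have E: "int (length ws) * level_order A zs c = int (length zs) * level_order B ws c"
    using assms unfolding proportional_level_def by simp
  have "level_order A zs c < 0 \<or> level_order B ws c < 0"
    using neg level_order_le[of zs A c] level_order_le[of ws B c] by auto
  then show ?thesis using E ne by auto
qed

lemma proportional_level_below_roots:
  assumes "\<forall>z\<in>set zs \<union> set ws. z \<noteq> 0 \<longrightarrow> c \<le> fls_subdegree z"
  shows "proportional_level A zs B ws c"
proof -
  have z: "\<forall>z\<in>set zs. z \<noteq> 0 \<longrightarrow> c \<le> fls_subdegree z"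
    and w: "\<forall>w\<in>set ws. w \<noteq> 0 \<longrightarrow> c \<le> fls_subdegree w" using assms by auto
  show ?thesis
    using level_data_below_roots(1)[OF z] level_data_below_roots(2)[OF z, of A]
      level_data_below_roots(1)[OF w] level_data_below_roots(2)[OF w, of B] par
    unfolding proportional_level_def by (simp add: algebra_simps)
qed

lemma proportional_levels_propagate:
  assumes low: "\<forall>z\<in>set zs \<union> set ws. z \<noteq> 0 \<longrightarrow> cl \<le> fls_subdegree z"
    and W: "\<forall>c. cl \<le> c \<and> c < cs \<longrightarrow> level_wronskian A zs B ws c = 0"
  shows "\<forall>c\<le>cs. proportional_level A zs B ws c"
    and "\<forall>c<cs. \<forall>r. length zs * order r (level_form B ws c) = length ws * order r (level_form A zs c)"
proof -
  have below: "proportional_level A zs B ws c" if "c \<le> cl" for c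
    using low that by (intro proportional_level_below_roots) force
  have step_orders: "length zs * order r (level_form B ws c) = length ws * order r (level_form A zs c)"
    if "cl \<le> c" "c < cs" "proportional_level A zs B ws c" for c r
    using orders_proportional_if_level_wronskian_eq_0[OF AB that(3)] W that level_order_nonzero by blast
  have P: "proportional_level A zs B ws c" if "c \<le> cs" for c
  proof (cases "c \<le> cl")
    case False
    then have "cl \<le> c" by simp
    then show ?thesis using that
    proof (induction c rule: int_ge_induct)
      case (step i)
      then have "proportional_level A zs B ws i" by simp
      with step show ?case using proportional_level_succ[OF AB] step_orders by simp
    qed (use below in simp)
  qed (use below in simp)
  show "\<forall>c\<le>cs. proportional_level A zs B ws c" using P by blast
  show "\<forall>c<cs. \<forall>r. length zs * order r (level_form B ws c) = length ws * order r (level_form A zs c)"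
  proof (intro allI impI)
    fix c r assume "c < cs"
    show "length zs * order r (level_form B ws c) = length ws * order r (level_form A zs c)"
    proof (cases "cl \<le> c")
      case True then show ?thesis using step_orders P \<open>c < cs\<close> by simp
    next
      case False then show ?thesis using low by (intro orders_proportional_below_roots[OF AB]) force
    qed
  qed
qed

lemma roots_nonzero_if_proportional_above:
  assumes above: "\<forall>z\<in>set zs \<union> set ws. z \<noteq> 0 \<longrightarrow> fls_subdegree z < c"
    and P: "proportional_level A zs B ws c"
  shows "\<forall>z\<in>set zs \<union> set ws. z \<noteq> 0"
proof -
  have zeros: "count_ge xs c = length (filter (\<lambda>z. z = 0) xs)" if "set xs \<subseteq> set zs \<union> set ws" for xs
    using that above unfolding count_ge_def by (induction xs) auto
  have "count_ge zs c = 0 \<or> count_ge ws c = 0"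
    using neg zeros[of zs] zeros[of ws] by (auto simp: filter_empty_conv)
  then have "count_ge zs c = 0 \<and> count_ge ws c = 0"
    using P ne unfolding proportional_level_def by (metis mult_is_0 length_0_conv)
  then show ?thesis using zeros[of zs] zeros[of ws] by (auto simp: filter_empty_conv)
qed

lemma terminal_level_at_top:
  assumes high: "\<forall>z\<in>set zs \<union> set ws. z \<noteq> 0 \<longrightarrow> fls_subdegree z < ch"
    and P: "\<forall>c\<le>ch. proportional_level A zs B ws c"
  obtains cs where "cs < ch" "terminal_level zs ws cs"
proof -
  have nz: "\<forall>z\<in>set zs \<union> set ws. z \<noteq> 0"
    using roots_nonzero_if_proportional_above[OF high] P by blast
  define cs where "cs = Max (fls_subdegree ` set zs)"
  have fz: "finite (fls_subdegree ` set zs)" "fls_subdegree ` set zs \<noteq> {}" using ne by auto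
  obtain z0 where z0: "z0 \<in> set zs" "fls_subdegree z0 = cs" unfolding cs_def using Max_in[OF fz] by auto
  have "count_gt zs cs = 0"
    unfolding count_gt_def cs_def using fz nz by (auto simp: filter_empty_conv)
  moreover have "count_eq zs cs > 0" unfolding count_eq_def using z0 nz
    by (metis (mono_tags, lifting) UnI1 filter_empty_conv length_greater_0_conv)
  moreover have "cs < ch" using high z0 nz by auto
  ultimately show thesis using that terminal_level_if_last_roots[OF ne, of A B cs] P by simp
qed

lemma exists_terminal_level:
  "\<exists>cs. (\<forall>c\<le>cs. proportional_level A zs B ws c)
     \<and> (\<forall>c<cs. \<forall>r. length zs * order r (level_form B ws c) = length ws * order r (level_form A zs c))
     \<and> terminal_level zs ws cs"
proof -
  obtain cl ch where "\<forall>z\<in>set (zs @ ws). z \<noteq> 0 \<longrightarrow> cl \<le> fls_subdegree z \<and> fls_subdegree z < ch"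
    by (rule fls_subdegree_bounds)
  then have low: "\<forall>z\<in>set zs \<union> set ws. z \<noteq> 0 \<longrightarrow> cl \<le> fls_subdegree z"
    and high: "\<forall>z\<in>set zs \<union> set ws. z \<noteq> 0 \<longrightarrow> fls_subdegree z < ch" by auto
  show ?thesis
  proof (cases "\<exists>c. cl \<le> c \<and> c < ch \<and> level_wronskian A zs B ws c \<noteq> 0")
    case True
    define Bad where "Bad = {c. cl \<le> c \<and> c < ch \<and> level_wronskian A zs B ws c \<noteq> 0}"
    have "finite Bad" unfolding Bad_def by (rule finite_subset[of _ "{cl..<ch}"]) auto
    moreover have "Bad \<noteq> {}" using True unfolding Bad_def by blast
    ultimately have c0: "Min Bad \<in> Bad" and least: "\<And>c. c \<in> Bad \<Longrightarrow> Min Bad \<le> c" by simp_all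
    have "\<forall>c. cl \<le> c \<and> c < Min Bad \<longrightarrow> level_wronskian A zs B ws c = 0"
      using c0 least unfolding Bad_def by force
    note upto = proportional_levels_propagate[OF low this]
    have "terminal_level zs ws (Min Bad)"
      using terminal_level_if_level_wronskian_nonzero[OF AB ne level_wronskian_const] upto(1) c0
      unfolding Bad_def by blast
    then show ?thesis using upto by blast
  next
    case False
    then have "\<forall>c. cl \<le> c \<and> c < ch \<longrightarrow> level_wronskian A zs B ws c = 0" by blast
    note upto = proportional_levels_propagate[OF low this]
    obtain cs where "cs < ch" "terminal_level zs ws cs" using terminal_level_at_top[OF high upto(1)] .
    with upto show ?thesis by (intro exI[of _ cs]) simp
  qed
qed

end

section \<open>Ramification\<close>

abbreviation ramify :: "nat \<Rightarrow> 'a::zero fls \<Rightarrow> 'a fls" where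
  "ramify d f \<equiv> fls_compose_power f d"

lemma ramify_nth: "d > 0 \<Longrightarrow> ramify d f $$ n = (if int d dvd n then f $$ (n div int d) else 0)"
  by (rule fls_nth_compose_power)

lemma ramify_eq_0_iff: "d > 0 \<Longrightarrow> ramify d f = 0 \<longleftrightarrow> f = 0"
proof
  assume d: "d > 0" and z: "ramify d f = 0"
  show "f = 0"
  proof (rule fls_eqI)
    fix n
    have "ramify d f $$ (int d * n) = f $$ n" using d by (simp add: ramify_nth)
    then show "f $$ n = 0 $$ n" using z by simp
  qed
qed simp

lemma fls_subdegree_ramify: "d > 0 \<Longrightarrow> f \<noteq> 0 \<Longrightarrow> fls_subdegree (ramify d f) = int d * fls_subdegree f"
proof (rule fls_subdegree_eqI)
  assume d: "d > 0" and f: "f \<noteq> 0"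
  show "ramify d f $$ (int d * fls_subdegree f) \<noteq> 0" using d f by (simp add: ramify_nth nth_fls_subdegree_nonzero)
  fix k assume k: "k < int d * fls_subdegree f"
  show "ramify d f $$ k = 0"
  proof (cases "int d dvd k")
    case True
    then obtain m where m: "k = int d * m" by blast
    then have "m < fls_subdegree f" using k d by (simp add: mult_less_cancel_left)
    then show ?thesis using d m by (simp add: ramify_nth nth_less_subdegree_zero)
  qed (use d in \<open>simp add: ramify_nth\<close>)
qed

lemma inco_ramify: "d > 0 \<Longrightarrow> inco (ramify d f) = inco f"
  by (cases "f = 0") (simp_all add: inco_def fls_subdegree_ramify ramify_nth)

lemma ramify_ramify: "a > 0 \<Longrightarrow> b > 0 \<Longrightarrow> ramify b (ramify a f) = ramify (a * b) f"
proof (rule fls_eqI)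
  fix n assume a: "a > 0" and b: "b > 0"
  have D: "int b dvd n \<and> int a dvd n div int b \<longleftrightarrow> int (a * b) dvd n"
    by (metis dvd_div_iff_mult dvd_mult_left mult.commute of_nat_0_less_iff of_nat_mult a b
        dvd_mult_div_cancel zdvd_mult_cancel1 less_irrefl dvd_div_mult_self)
  have V: "n div int b div int a = n div int (a * b)"
    by (metis zdiv_zmult2_eq of_nat_0_le_iff mult.commute of_nat_mult)
  have L: "ramify b (ramify a f) $$ n = (if int b dvd n \<and> int a dvd n div int b then f $$ (n div int b div int a) else 0)"
    using a b by (simp add: ramify_nth)
  have R: "ramify (a * b) f $$ n = (if int (a * b) dvd n then f $$ (n div int (a * b)) else 0)"
    using a b by (intro ramify_nth) simp
  show "ramify b (ramify a f) $$ n = ramify (a * b) f $$ n"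
    unfolding L R D V ..
qed

context
  fixes h :: "'a::idom \<Rightarrow> 'b::idom"
  assumes h0: "h 0 = 0" and h1: "h 1 = 1" and hadd: "\<And>x y. h (x + y) = h x + h y"
    and hmult: "\<And>x y. h (x * y) = h x * h y"
begin

lemma hom_uminus: "h (- x) = - h x"
proof -
  have "h x + h (- x) = 0" using hadd[of x "-x"] h0 by simp
  then show ?thesis by (metis neg_eq_iff_add_eq_0)
qed

lemma hom_diff: "h (x - y) = h x - h y"
  by (metis diff_conv_add_uminus hadd hom_uminus)

lemma hom_of_nat_mult: "h (of_nat n * x) = of_nat n * h x"
  by (induction n) (simp_all add: h0 hadd distrib_right)

lemma map_poly_hom_add: "map_poly h (p + q) = map_poly h p + map_poly h q"
  by (intro poly_eqI) (simp add: coeff_map_poly h0 hadd)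

lemma map_poly_hom_diff: "map_poly h (p - q) = map_poly h p - map_poly h q"
  by (intro poly_eqI) (simp add: coeff_map_poly h0 hom_diff)

lemma map_poly_hom_mult: "map_poly h (p * q) = map_poly h p * map_poly h q"
proof (induction p)
  case 0 then show ?case by simp
next
  case (pCons a p)
  have "map_poly h (pCons a p * q) = map_poly h (smult a q + pCons 0 (p * q))" by simp
  also have "\<dots> = smult (h a) (map_poly h q) + pCons 0 (map_poly h p * map_poly h q)"
    by (simp only: map_poly_hom_add map_poly_smult[of h, OF h0 hmult] map_poly_pCons[of h, OF h0] h0 pCons(2))
  also have "\<dots> = map_poly h (pCons a p) * map_poly h q" by (simp add: map_poly_pCons h0)
  finally show ?case .
qed

lemma map_poly_hom_prod_linear: "map_poly h (\<Prod>z\<leftarrow>zs. [:-z, 1:]) = (\<Prod>z\<leftarrow>zs. [:- h z, 1:])"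
proof (induction zs)
  case Nil then show ?case by (simp add: map_poly_pCons h0 h1 one_pCons)
next
  case (Cons a zs)
  have "map_poly h [:-a, 1:] = [:- h a, 1:]" by (simp add: map_poly_pCons h0 h1 hom_uminus)
  then show ?case using Cons by (simp only: prod_list.Cons list.map map_poly_hom_mult)
qed

lemma map_poly_hom_pderiv: "map_poly h (pderiv p) = pderiv (map_poly h p)"
  by (intro poly_eqI) (simp only: coeff_map_poly[of h, OF h0] coeff_pderiv hom_of_nat_mult)

end

lemma fls_deriv_ramify:
  fixes f :: "'a::field_char_0 fls"
  assumes d: "d > 0"
  shows "fls_deriv (ramify d f) = fls_shift (- (int d - 1)) (fls_const (of_nat d)) * ramify d (fls_deriv f)"
proof (rule fls_eqI)
  fix n
  have R: "(fls_shift (- (int d - 1)) (fls_const (of_nat d)) * ramify d (fls_deriv f)) $$ n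
      = of_nat d * ramify d (fls_deriv f) $$ (n - (int d - 1))"
    by (simp add: fls_shifted_times_simps algebra_simps)
  show "fls_deriv (ramify d f) $$ n = (fls_shift (- (int d - 1)) (fls_const (of_nat d)) * ramify d (fls_deriv f)) $$ n"
  proof (cases "int d dvd n + 1")
    case True
    then obtain m where m: "n + 1 = int d * m" by blast
    have "n - (int d - 1) = int d * (m - 1)" using m by (simp add: algebra_simps)
    then have "ramify d (fls_deriv f) $$ (n - (int d - 1)) = of_int m * f $$ m"
      using d by (simp add: ramify_nth)
    moreover have "fls_deriv (ramify d f) $$ n = of_int (int d * m) * f $$ m"
      using d m by (simp add: ramify_nth)
    ultimately show ?thesis unfolding R by simp
  next
    case False
    have "\<not> int d dvd n - (int d - 1)"
    proof
      assume "int d dvd n - (int d - 1)"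
      then have "int d dvd (n - (int d - 1)) + int d" by (rule dvd_add) simp
      then show False using False by (simp add: algebra_simps)
    qed
    then show ?thesis unfolding R using d False by (simp add: ramify_nth)
  qed
qed

lemma map_poly_ramify_smult: "map_poly (ramify d) (smult a p) = smult (ramify d a) (map_poly (ramify d) (p :: 'a::idom fls poly))"
  by (rule map_poly_smult) simp_all

lemma prod_list_linear_map: "(\<Prod>z\<leftarrow>map f zs. [:-z, 1:]) = (\<Prod>z\<leftarrow>zs. [:- f z, 1:])"
  by (induction zs) auto

lemma root_factorization_ramify:
  fixes F :: "'a::field fls poly"
  assumes r: "root_factorization F nu zs" and mu: "mu > 0"
  shows "root_factorization F (nu * mu) (map (ramify mu) zs)"
proof -
  have nu: "nu > 0" using r unfolding root_factorization_def by simp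
  have r': "map_poly (ramify nu) F = smult (ramify nu (lead_coeff F)) (\<Prod>z\<leftarrow>zs. [:-z, 1:])"
    using r unfolding root_factorization_def by simp
  have "map_poly (ramify (nu * mu)) F = map_poly (ramify mu) (map_poly (ramify nu) F)"
    by (subst map_poly_map_poly) (simp_all add: comp_def ramify_ramify nu mu)
  also have "\<dots> = smult (ramify mu (ramify nu (lead_coeff F))) (map_poly (ramify mu) (\<Prod>z\<leftarrow>zs. [:-z, 1:]))"
    unfolding r' map_poly_ramify_smult ..
  also have "map_poly (ramify mu) (\<Prod>z\<leftarrow>zs. [:-z, 1:]) = (\<Prod>z\<leftarrow>zs. [:- ramify mu z, 1:])"
    by (rule map_poly_hom_prod_linear) (use mu in simp_all)
  finally have X: "map_poly (ramify (nu * mu)) F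
      = smult (ramify mu (ramify nu (lead_coeff F))) (\<Prod>z\<leftarrow>zs. [:- ramify mu z, 1:])" .
  then show ?thesis
    unfolding root_factorization_def prod_list_linear_map using nu mu by (simp add: ramify_ramify)
qed

lemma degree_prod_list_linear: "degree (\<Prod>z\<leftarrow>zs. [:-z, 1:]) = length (zs :: 'a::idom list)"
proof (induction zs)
  case (Cons a zs)
  have "(\<Prod>z\<leftarrow>zs. [:-z, 1:]) \<noteq> 0" by (auto simp: prod_list_zero_iff)
  then have "degree ([:-a, 1:] * (\<Prod>z\<leftarrow>zs. [:-z, 1:])) = degree [:-a, 1::'a:] + degree (\<Prod>z\<leftarrow>zs. [:-z, 1:])"
    by (intro degree_mult_eq) simp_all
  then show ?case using Cons by simp
qed simp

lemma degree_map_poly_ramify: "d > 0 \<Longrightarrow> degree (map_poly (ramify d) F) = degree F"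
  by (rule degree_map_poly) (simp add: ramify_eq_0_iff)

lemma jac_map_poly_ramify:
  fixes F G :: "'a::field_char_0 fls poly"
  assumes d: "d > 0"
  shows "jac (map_poly (ramify d) F) (map_poly (ramify d) G) =
    smult (fls_shift (- (int d - 1)) (fls_const (of_nat d))) (map_poly (ramify d) (jac F G))"
proof -
  define K :: "'a fls" where "K = fls_shift (- (int d - 1)) (fls_const (of_nat d))"
  have h: "ramify d 0 = (0::'a fls)" "ramify d 1 = (1::'a fls)" "\<And>x y. ramify d (x + y) = ramify d x + ramify d (y::'a fls)"
    "\<And>x y. ramify d (x * y) = ramify d x * ramify d (y::'a fls)" using d by simp_all
  have dx: "map_poly fls_deriv (map_poly (ramify d) H) = smult K (map_poly (ramify d) (map_poly fls_deriv H))" for H :: "'a fls poly"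
    by (intro poly_eqI) (simp add: coeff_map_poly fls_deriv_ramify[OF d] K_def)
  have dy: "pderiv (map_poly (ramify d) H) = map_poly (ramify d) (pderiv H)" for H :: "'a fls poly"
    using map_poly_hom_pderiv[of "ramify d", OF h] by simp
  show ?thesis
    unfolding jac_def dx dy K_def[symmetric]
    by (simp add: map_poly_hom_mult[of "ramify d", OF h] map_poly_hom_diff[of "ramify d", OF h] smult_diff_right)
qed

lemma coeff_0_prod_list_linear: "coeff (\<Prod>z\<leftarrow>zs. [:-z, 1:]) 0 = (\<Prod>z\<leftarrow>zs. - z)"
  by (induction zs) (simp_all add: coeff_mult_0)

lemma fls_subdegree_mult_prod_list:
  fixes A :: "'a::field fls"
  assumes "A * (\<Prod>z\<leftarrow>zs. - z) \<noteq> 0"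
  shows "(\<forall>z\<in>set zs. z \<noteq> 0) \<and>
    fls_subdegree (A * (\<Prod>z\<leftarrow>zs. - z)) = fls_subdegree A + (\<Sum>z\<leftarrow>zs. fls_subdegree z)"
  using assms
proof (induction zs arbitrary: A)
  case Nil then show ?case by simp
next
  case (Cons a zs)
  have e: "A * (\<Prod>z\<leftarrow>a # zs. - z) = (A * - a) * (\<Prod>z\<leftarrow>zs. - z)" by (simp add: algebra_simps)
  have "A * - a * (\<Prod>z\<leftarrow>zs. - z) \<noteq> 0" using Cons(2) e by simp
  then have IH: "(\<forall>z\<in>set zs. z \<noteq> 0) \<and>
      fls_subdegree (A * - a * (\<Prod>z\<leftarrow>zs. - z)) = fls_subdegree (A * - a) + (\<Sum>z\<leftarrow>zs. fls_subdegree z)"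
    using Cons(1) by blast
  have a: "a \<noteq> 0" "A \<noteq> 0" using Cons(2) by auto
  then have "fls_subdegree (A * - a) = fls_subdegree A + fls_subdegree a" by (simp add: fls_uminus_subdegree)
  have "fls_subdegree (A * (\<Prod>z\<leftarrow>a # zs. - z)) = fls_subdegree (A * - a * (\<Prod>z\<leftarrow>zs. - z))"
    unfolding e ..
  also have "\<dots> = fls_subdegree A + fls_subdegree a + (\<Sum>z\<leftarrow>zs. fls_subdegree z)"
    using IH \<open>fls_subdegree (A * - a) = fls_subdegree A + fls_subdegree a\<close> by simp
  finally show ?case using IH a by (simp add: add.assoc)
qed

lemma ramified_coeff_0:
  fixes F :: "'a::field fls poly"
  assumes rF: "root_factorization F D zs" and L: "lead_coeff F \<noteq> 0"
  shows "coeff F 0 \<noteq> 0 \<longleftrightarrow> (\<forall>z\<in>set zs. z \<noteq> 0)"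
    and "coeff F 0 \<noteq> 0 \<Longrightarrow>
      fls_subdegree (ramify D (lead_coeff F)) + (\<Sum>z\<leftarrow>zs. fls_subdegree z) = int D * fls_subdegree (coeff F 0)"
proof -
  have D: "D > 0" using rF unfolding root_factorization_def by simp
  have X: "ramify D (coeff F 0) = ramify D (lead_coeff F) * (\<Prod>z\<leftarrow>zs. - z)"
    using arg_cong[OF rF[unfolded root_factorization_def, THEN conjunct2], of "\<lambda>p. coeff p 0"]
    by (simp add: coeff_map_poly coeff_0_prod_list_linear)
  have A: "ramify D (lead_coeff F) \<noteq> 0" using L D by (simp add: ramify_eq_0_iff)
  have P: "(\<Prod>z\<leftarrow>zs. - z) \<noteq> 0 \<longleftrightarrow> (\<forall>z\<in>set zs. z \<noteq> 0)"
    by (induction zs) auto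
  show "coeff F 0 \<noteq> 0 \<longleftrightarrow> (\<forall>z\<in>set zs. z \<noteq> 0)"
    using X A P D by (metis ramify_eq_0_iff mult_eq_0_iff)
  assume c: "coeff F 0 \<noteq> 0"
  then have "ramify D (lead_coeff F) * (\<Prod>z\<leftarrow>zs. - z) \<noteq> 0" using X D by (metis ramify_eq_0_iff)
  from fls_subdegree_mult_prod_list[OF this] have "fls_subdegree (ramify D (lead_coeff F) * (\<Prod>z\<leftarrow>zs. - z)) =
     fls_subdegree (ramify D (lead_coeff F)) + (\<Sum>z\<leftarrow>zs. fls_subdegree z)" by blast
  then show "fls_subdegree (ramify D (lead_coeff F)) + (\<Sum>z\<leftarrow>zs. fls_subdegree z) = int D * fls_subdegree (coeff F 0)"
    using X fls_subdegree_ramify[OF D c] by simp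
qed

lemma O0_eq_subdegree: "F \<noteq> 0 \<Longrightarrow> O0 F = ereal (of_int (fls_subdegree (lead_coeff F)))"
  unfolding O0_def ordX_def by simp

lemma ordX_ramify: "d > 0 \<Longrightarrow> ordX (ramify d z) = (if z = 0 then \<infinity> else ereal (real d * of_int (fls_subdegree z)))"
  by (auto simp: ordX_def ramify_eq_0_iff fls_subdegree_ramify)

lemma rord_ramify: "nu > 0 \<Longrightarrow> mu > 0 \<Longrightarrow> rord (nu * mu) (ramify mu z) = rord nu (z :: 'a::zero fls)"
proof -
  assume a: "nu > 0" "mu > 0"
  show ?thesis
  proof (cases "z = 0")
    case True then show ?thesis using a by (simp add: rord_def ordX_def)
  next
    case False
    then have "ordX (ramify mu z) = ereal (real mu * of_int (fls_subdegree z))" using a by (simp add: ordX_ramify)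
    moreover have "ordX z = ereal (of_int (fls_subdegree z))" using False by (simp add: ordX_def)
    ultimately show ?thesis using a unfolding rord_def by (simp add: field_simps)
  qed
qed

lemma root_data_map:
  fixes f :: "'a::comm_ring_1 fls \<Rightarrow> 'a fls"
  assumes fr: "\<And>z. rord D (f z) = rord nu z" and fi: "\<And>z. inco (f z) = inco z"
  shows "iota D (map f zs) = iota nu zs" and "Ord D (map f zs) = Ord nu zs"
    and "Ohat D (map f zs) = Ohat nu zs" and "Li D (map f zs) = Li nu zs"
    and "Lhat D (map f zs) = Lhat nu zs" and "Ppoly F D (map f zs) = Ppoly F nu zs"
proof -
  have ords: "root_ords D (map f zs) = root_ords nu zs" unfolding root_ords_def by (simp add: comp_def fr)
  then show iota: "iota D (map f zs) = iota nu zs" and Ord: "Ord D (map f zs) = Ord nu zs"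
    unfolding iota_def Ord_def by simp_all
  then show "Ohat D (map f zs) = Ohat nu zs" unfolding Ohat_def by simp
  have "Lc D (map f zs) = Lc nu zs" unfolding Lc_def by (simp add: fun_eq_iff filter_map comp_def fr)
  then show Li: "Li D (map f zs) = Li nu zs" unfolding Li_def Ord by simp
  then show "Lhat D (map f zs) = Lhat nu zs" unfolding Lhat_def iota by simp
  have "Pc F D (map f zs) = Pc F nu zs" unfolding Pc_def by (simp add: fun_eq_iff filter_map comp_def fr fi)
  then show "Ppoly F D (map f zs) = Ppoly F nu zs" unfolding Ppoly_def Ord by simp
qed

lemma degree_eq_length_if_root_factorization:
  fixes F :: "'a::field fls poly"
  assumes rF: "root_factorization F D zs" and F: "F \<noteq> 0"
  shows "degree F = length zs"
proof -
  have D: "D > 0" using rF unfolding root_factorization_def by simp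
  have "ramify D (lead_coeff F) \<noteq> 0" using F D by (simp add: ramify_eq_0_iff)
  then show ?thesis
    using arg_cong[OF rF[unfolded root_factorization_def, THEN conjunct2], of degree]
    by (simp add: degree_map_poly_ramify[OF D] degree_prod_list_linear)
qed

lemma degree_jac_ramify:
  fixes F G :: "'a::field_char_0 fls poly"
  assumes D: "D > 0" and J: "degree (jac F G) = 0"
  shows "degree (jac (map_poly (ramify D) F) (map_poly (ramify D) G)) = 0"
proof -
  have "degree (jac (map_poly (ramify D) F) (map_poly (ramify D) G)) \<le> degree (map_poly (ramify D) (jac F G))"
    unfolding jac_map_poly_ramify[OF D] by (rule degree_smult_le)
  then show ?thesis unfolding degree_map_poly_ramify[OF D] J by simp
qed

lemma subdegree_lead_coeff_proportional:
  fixes F G :: "'a::zero fls poly"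
  assumes "ereal (real (degree G)) * O0 F = ereal (real (degree F)) * O0 G" and "F \<noteq> 0" "G \<noteq> 0"
  shows "int (degree G) * fls_subdegree (lead_coeff F) = int (degree F) * fls_subdegree (lead_coeff G)"
proof -
  have "real_of_int (int (degree G) * fls_subdegree (lead_coeff F))
      = real_of_int (int (degree F) * fls_subdegree (lead_coeff G))"
    using assms unfolding O0_eq_subdegree[OF assms(2)] O0_eq_subdegree[OF assms(3)] by simp
  then show ?thesis by (simp only: of_int_eq_iff)
qed

lemma intY_neg_ramified:
  fixes F :: "'a::field fls poly"
  assumes rF: "root_factorization F D zs" and F: "F \<noteq> 0" and neg: "intY F < 0"
  shows "(\<forall>z\<in>set zs. z \<noteq> 0) \<and> fls_subdegree (ramify D (lead_coeff F)) + (\<Sum>z\<leftarrow>zs. fls_subdegree z) < 0"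
proof -
  have D: "D > 0" using rF unfolding root_factorization_def by simp
  have c: "coeff F 0 \<noteq> 0" "fls_subdegree (coeff F 0) < 0"
    using neg unfolding intY_def ordX_def by (auto split: if_splits)
  then show ?thesis using ramified_coeff_0[OF rF] F D by (simp add: mult_pos_neg)
qed

lemma intY_proportional_ramified:
  fixes F G :: "'a::field fls poly"
  assumes rF: "root_factorization F D zs" and rG: "root_factorization G D ws" and FG: "F \<noteq> 0" "G \<noteq> 0"
    and nz: "\<forall>z\<in>set zs \<union> set ws. z \<noteq> 0"
    and eq: "int (length ws) * (fls_subdegree (ramify D (lead_coeff F)) + (\<Sum>z\<leftarrow>zs. fls_subdegree z)) =
             int (length zs) * (fls_subdegree (ramify D (lead_coeff G)) + (\<Sum>w\<leftarrow>ws. fls_subdegree w))"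
  shows "ereal (real (degree G)) * intY F = ereal (real (degree F)) * intY G"
proof -
  have D: "D > 0" using rF unfolding root_factorization_def by simp
  have cF: "coeff F 0 \<noteq> 0" and cG: "coeff G 0 \<noteq> 0"
    using ramified_coeff_0(1)[OF rF] ramified_coeff_0(1)[OF rG] FG nz by auto
  have "int D * (int (length ws) * fls_subdegree (coeff F 0)) = int D * (int (length zs) * fls_subdegree (coeff G 0))"
    using eq ramified_coeff_0(2)[OF rF _ cF] ramified_coeff_0(2)[OF rG _ cG] FG by (simp add: ac_simps)
  then have "int (length ws) * fls_subdegree (coeff F 0) = int (length zs) * fls_subdegree (coeff G 0)"
    using D by simp
  from arg_cong[OF this, of real_of_int]
  have "real (length ws) * real_of_int (fls_subdegree (coeff F 0))
      = real (length zs) * real_of_int (fls_subdegree (coeff G 0))" by simp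
  then show ?thesis
    unfolding intY_def ordX_def degree_eq_length_if_root_factorization[OF rF FG(1)]
      degree_eq_length_if_root_factorization[OF rG FG(2)] using cF cG by simp
qed

section \<open>Levels as rational root orders\<close>

definition level_ord :: "nat \<Rightarrow> int \<Rightarrow> ereal" where
  "level_ord D c = ereal (real_of_int c / real D)"

context
  fixes D :: nat
  assumes D: "D > 0"
begin

lemma level_ord_less_iff: "level_ord D a < level_ord D b \<longleftrightarrow> a < b"
  using D unfolding level_ord_def by (simp add: divide_less_cancel)

lemma level_ord_le_iff: "level_ord D a \<le> level_ord D b \<longleftrightarrow> a \<le> b"
  using D unfolding level_ord_def by (simp add: divide_le_cancel)

lemma level_ord_eq_iff: "level_ord D a = level_ord D b \<longleftrightarrow> a = b"
  using level_ord_le_iff by (metis order.antisym order_refl)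

lemma level_ord_finite: "level_ord D a \<noteq> \<infinity>" "level_ord D a < \<infinity>"
  unfolding level_ord_def by simp_all

lemma rord_eq_level_ord: "rord D z = (if z = 0 then \<infinity> else level_ord D (fls_subdegree z))"
  using D unfolding rord_def ordX_def level_ord_def by simp

lemma level_ord_le_rord_iff: "level_ord D c \<le> rord D z \<longleftrightarrow> z = 0 \<or> c \<le> fls_subdegree z"
  unfolding rord_eq_level_ord by (simp add: level_ord_le_iff)

lemma level_ord_less_rord_iff: "level_ord D c < rord D z \<longleftrightarrow> z = 0 \<or> c < fls_subdegree z"
  unfolding rord_eq_level_ord by (simp add: level_ord_less_iff level_ord_finite)

lemma rord_eq_level_ord_iff: "rord D z = level_ord D c \<longleftrightarrow> z \<noteq> 0 \<and> fls_subdegree z = c"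
proof (cases "z = 0")
  case True
  then show ?thesis unfolding rord_eq_level_ord using level_ord_finite(1)[of c] by (metis (no_types))
next
  case False
  then show ?thesis unfolding rord_eq_level_ord by (simp add: level_ord_eq_iff)
qed

lemma rord_less_level_ord_iff: "rord D z < level_ord D c \<longleftrightarrow> z \<noteq> 0 \<and> fls_subdegree z < c"
  unfolding rord_eq_level_ord by (simp add: level_ord_less_iff)

lemma Lc_level_ord: "Lc D zs (level_ord D c) = count_ge zs c"
  unfolding Lc_def count_ge_def by (simp add: level_ord_le_rord_iff)

lemma level_ord_in_root_ords_iff: "level_ord D c \<in> root_ords D zs \<longleftrightarrow> count_eq zs c > 0"
proof -
  have "level_ord D c \<in> root_ords D zs \<longleftrightarrow> (\<exists>z\<in>set zs. rord D z = level_ord D c)"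
    unfolding root_ords_def by (auto simp: image_iff) (metis)
  also have "\<dots> \<longleftrightarrow> (\<exists>z\<in>set zs. z \<noteq> 0 \<and> fls_subdegree z = c)"
    by (simp only: rord_eq_level_ord_iff)
  also have "\<dots> \<longleftrightarrow> count_eq zs c > 0"
    unfolding count_eq_def by (auto simp: filter_empty_conv)
  finally show ?thesis .
qed

lemma root_ords_cases:
  "x \<in> root_ords D zs \<Longrightarrow> x = \<infinity> \<or> (\<exists>z\<in>set zs. z \<noteq> 0 \<and> x = level_ord D (fls_subdegree z))"
  unfolding root_ords_def by (auto simp: rord_eq_level_ord)

lemma count_gt_0_iff: "count_gt zs c = 0 \<longleftrightarrow> (\<forall>x\<in>root_ords D zs. x \<le> level_ord D c)"
  unfolding count_gt_def root_ords_def by (auto simp: filter_empty_conv level_ord_less_rord_iff[symmetric] not_less)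

lemma count_gt_eq_1_D:
  assumes "count_gt zs c = 1"
  shows "\<exists>s>level_ord D c. root_ords D zs \<inter> {level_ord D c<..} = {s} \<and> Lc D zs s = 1 \<and>
     (level_ord D c \<notin> root_ords D zs \<longrightarrow> Lc D zs (level_ord D c) = 1)"
proof -
  have L1: "length (filter (\<lambda>z. level_ord D c < rord D z) zs) = 1"
    using assms unfolding count_gt_def by (simp add: level_ord_less_rord_iff)
  then obtain z0 where z0: "filter (\<lambda>z. level_ord D c < rord D z) zs = [z0]"
    using length_Suc_conv[of "filter (\<lambda>z. level_ord D c < rord D z) zs" 0] by auto
  have "z0 \<in> set (filter (\<lambda>z. level_ord D c < rord D z) zs)" using z0 by simp
  then have z0in: "z0 \<in> set zs" "level_ord D c < rord D z0" by auto
  have uniq: "rord D z = rord D z0" if "z \<in> set zs" "level_ord D c < rord D z" for z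
  proof -
    have "z \<in> set (filter (\<lambda>z. level_ord D c < rord D z) zs)" using that by simp
    then show ?thesis using z0 by simp
  qed
  define s where "s = rord D z0"
  have S: "root_ords D zs \<inter> {level_ord D c<..} = {s}"
  proof
    show "root_ords D zs \<inter> {level_ord D c<..} \<subseteq> {s}"
    proof
      fix x assume "x \<in> root_ords D zs \<inter> {level_ord D c<..}"
      then obtain z where "z \<in> set zs" "x = rord D z" "level_ord D c < x" unfolding root_ords_def by auto
      then show "x \<in> {s}" using uniq[of z] unfolding s_def by simp
    qed
    show "{s} \<subseteq> root_ords D zs \<inter> {level_ord D c<..}"
      using z0in unfolding root_ords_def s_def by simp
  qed
  have Ls: "Lc D zs s = 1"
  proof -
    have "length (filter (\<lambda>z. s \<le> rord D z) zs) \<le> length (filter (\<lambda>z. level_ord D c < rord D z) zs)"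
    proof -
      have "filter (\<lambda>z. s \<le> rord D z) zs = filter (\<lambda>z. s \<le> rord D z) (filter (\<lambda>z. level_ord D c < rord D z) zs)"
        unfolding filter_filter using z0in(2) unfolding s_def by (intro filter_cong) auto
      then show ?thesis by (metis length_filter_le)
    qed
    moreover have "length (filter (\<lambda>z. s \<le> rord D z) zs) > 0"
      using z0in unfolding s_def by (metis (mono_tags, lifting) filter_empty_conv length_greater_0_conv order_refl)
    ultimately show ?thesis using L1 unfolding Lc_def by linarith
  qed
  have "level_ord D c \<notin> root_ords D zs \<longrightarrow> Lc D zs (level_ord D c) = 1"
    using level_ord_in_root_ords_iff[of c zs] count_ge_split[of zs c] assms unfolding Lc_level_ord by simp
  then show ?thesis using S Ls z0in unfolding s_def by blast
qed

lemma smult_prod_lin_form: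
  fixes a :: "'a::comm_ring_1" and c :: int and zs :: "'a fls list"
  defines "lt \<equiv> \<lambda>z. rord D z < level_ord D c" and "eq \<equiv> \<lambda>z. rord D z = level_ord D c"
    and "gt \<equiv> \<lambda>z. level_ord D c < rord D z"
  shows "smult a (\<Prod>z\<leftarrow>zs. lin_form c z) = smult ((-1) ^ length (filter lt zs) * a * (\<Prod>z\<leftarrow>filter lt zs. inco z))
       ((\<Prod>z\<leftarrow>filter eq zs. [:- inco z, 1:]) * monom 1 (length (filter gt zs)))"
proof (induction zs arbitrary: a)
  case Nil then show ?case by (simp add: monom_0 one_pCons)
next
  case (Cons z zs)
  define R where "R = (\<Prod>z\<leftarrow>zs. lin_form c z)"
  define k where "k = length (filter lt zs)"
  define P where "P = (\<Prod>z\<leftarrow>filter lt zs. inco z)"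
  define E where "E = (\<Prod>z\<leftarrow>filter eq zs. [:- inco z, 1:])"
  define g where "g = length (filter gt zs)"
  have IH: "smult b R = smult ((-1) ^ k * b * P) (E * monom 1 g)" for b
    using Cons unfolding R_def k_def P_def E_def g_def by simp
  have L: "(\<Prod>z\<leftarrow>z # zs. lin_form c z) = lin_form c z * R" unfolding R_def by simp
  consider "z \<noteq> 0 \<and> fls_subdegree z < c" | "z \<noteq> 0 \<and> fls_subdegree z = c" | "z = 0 \<or> c < fls_subdegree z"
    by force
  then show ?case
  proof cases
    case 1
    then have lz: "lin_form c z = [:- inco z:]" unfolding lin_form_def by simp
    have p: "lt z" "\<not> eq z" "\<not> gt z" using 1
      unfolding lt_def eq_def gt_def by (auto simp: rord_less_level_ord_iff rord_eq_level_ord_iff level_ord_less_rord_iff)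
    have "smult a (lin_form c z * R) = smult (a * (- inco z)) R" unfolding lz by simp
    also have "\<dots> = smult ((-1) ^ Suc k * a * (inco z * P)) (E * monom 1 g)" unfolding IH by (simp add: algebra_simps)
    finally show ?thesis unfolding L using p unfolding k_def P_def E_def g_def by simp
  next
    case 2
    then have lz: "lin_form c z = [:- inco z, 1:]" unfolding lin_form_def by simp
    have p: "\<not> lt z" "eq z" "\<not> gt z" using 2
      unfolding lt_def eq_def gt_def by (auto simp: rord_less_level_ord_iff rord_eq_level_ord_iff level_ord_less_rord_iff)
    have "smult a (lin_form c z * R) = lin_form c z * smult a R" by (metis mult_smult_right)
    also have "\<dots> = smult ((-1) ^ k * a * P) ((lin_form c z * E) * monom 1 g)"
      unfolding IH by (metis mult_smult_right mult.assoc)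
    finally show ?thesis unfolding L using p lz unfolding k_def P_def E_def g_def by simp
  next
    case 3
    then have lz: "lin_form c z = [:0, 1:]" unfolding lin_form_def by auto
    have p: "\<not> lt z" "\<not> eq z" "gt z" using 3
      unfolding lt_def eq_def gt_def by (auto simp: rord_less_level_ord_iff rord_eq_level_ord_iff level_ord_less_rord_iff)
    have m: "monom (1::'a) (Suc g) = [:0, 1:] * monom 1 g" by (simp add: monom_Suc)
    have "smult a (lin_form c z * R) = lin_form c z * smult a R" by (metis mult_smult_right)
    also have "\<dots> = smult ((-1) ^ k * a * P) (E * ([:0, 1:] * monom 1 g))"
      unfolding IH lz by (metis mult_smult_right mult.left_commute)
    also have "\<dots> = smult ((-1) ^ k * a * P) (E * monom 1 (Suc g))" unfolding m ..
    finally show ?thesis unfolding L using p unfolding k_def P_def E_def g_def by simp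
  qed
qed

lemma level_form_eq_Pc:
  fixes F :: "'a::field fls poly"
  assumes "inco A = inco (lead_coeff F)"
  shows "level_form A zs c = smult ((-1) ^ length (filter (\<lambda>z. rord D z < level_ord D c) zs)) (Pc F D zs (level_ord D c))"
proof -
  have "level_form A zs c = smult (inco A) (\<Prod>z\<leftarrow>zs. lin_form c z)" unfolding level_form_def by simp
  then show ?thesis unfolding smult_prod_lin_form Pc_def assms by (simp add: algebra_simps)
qed

end

lemma length_filter_pos_iff: "length (filter P xs) > 0 \<longleftrightarrow> (\<exists>x\<in>set xs. P x)"
  by (induction xs) auto

lemma count_eq_pos_iff_order:
  fixes A :: "'a::field fls"
  assumes "A \<noteq> 0"
  shows "count_eq zs c > 0 \<longleftrightarrow> (\<exists>r. r \<noteq> 0 \<and> order r (level_form A zs c) > 0)"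
proof
  assume "count_eq zs c > 0"
  then obtain z where z: "z \<in> set zs" "z \<noteq> 0" "fls_subdegree z = c"
    unfolding count_eq_def length_filter_pos_iff by blast
  then have "count_root zs c (inco z) > 0" unfolding count_root_def length_filter_pos_iff by blast
  then show "\<exists>r. r \<noteq> 0 \<and> order r (level_form A zs c) > 0"
    using inco_nonzero[OF z(2)] order_level_form[OF assms, of "inco z" zs c] by (intro exI[of _ "inco z"]) auto
next
  assume "\<exists>r. r \<noteq> 0 \<and> order r (level_form A zs c) > 0"
  then obtain r where r: "r \<noteq> 0" "count_root zs c r > 0" using order_level_form[OF assms] by fastforce
  then show "count_eq zs c > 0" unfolding count_root_def count_eq_def length_filter_pos_iff by blast
qed

section \<open>Comparing the Newton data of two polynomials\<close>

lemma sorted_list_of_set_insert_greatest: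
  assumes "finite S" "\<forall>x\<in>S. x < s"
  shows "sorted_list_of_set (insert s S) = sorted_list_of_set S @ [s]"
proof -
  have "sorted_wrt (<) (sorted_list_of_set S @ [s])" using assms
    by (simp add: sorted_wrt_append)
  moreover have "set (sorted_list_of_set S @ [s]) = insert s S" using assms by simp
  moreover have "sorted_wrt (<) (sorted_list_of_set (insert s S))" by (rule strict_sorted_list_of_set)
  moreover have "set (sorted_list_of_set (insert s S)) = insert s S" using assms(1) by (intro set_sorted_list_of_set) simp
  ultimately show ?thesis
    using strict_sorted_equal[of "sorted_list_of_set S @ [s]" "sorted_list_of_set (insert s S)"] by metis
qed

lemma sorted_list_of_set_nth_mem: "finite S \<Longrightarrow> i < card S \<Longrightarrow> sorted_list_of_set S ! i \<in> S"
  by (metis length_sorted_list_of_set nth_mem set_sorted_list_of_set)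

lemma sorted_list_of_set_nth_less:
  "finite S \<Longrightarrow> i < j \<Longrightarrow> j < card S \<Longrightarrow> sorted_list_of_set S ! i < sorted_list_of_set S ! j"
  by (metis length_sorted_list_of_set sorted_wrt_nth_less strict_sorted_list_of_set)

lemma finite_root_ords: "finite (root_ords nu zs)" unfolding root_ords_def by simp

lemma Ord_in_root_ords: "1 \<le> i \<Longrightarrow> i \<le> iota nu zs \<Longrightarrow> Ord nu zs i \<in> root_ords nu zs"
  unfolding Ord_def iota_def using sorted_list_of_set_nth_mem[OF finite_root_ords[of nu zs], of "i - 1"] by simp

lemma Ord_strict_mono: "1 \<le> i \<Longrightarrow> i < j \<Longrightarrow> j \<le> iota nu zs \<Longrightarrow> Ord nu zs i < Ord nu zs j"
  unfolding Ord_def iota_def using sorted_list_of_set_nth_less[OF finite_root_ords[of nu zs], of "i - 1" "j - 1"] by simp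

lemma iota_eq_length: "iota nu zs = length (sorted_list_of_set (root_ords nu zs))"
  unfolding iota_def by simp

definition newton_agree ::
  "ereal \<Rightarrow> 'a::field fls poly \<Rightarrow> nat \<Rightarrow> 'a fls list \<Rightarrow> 'a fls poly \<Rightarrow> nat \<Rightarrow> 'a fls list \<Rightarrow> bool" where
  "newton_agree t F nu zs G mu ws \<longleftrightarrow>
     (\<forall>x<t. x \<in> root_ords nu zs \<longleftrightarrow> x \<in> root_ords mu ws) \<and>
     (\<forall>x\<le>t. x \<in> root_ords nu zs \<union> root_ords mu ws \<longrightarrow> degree G * Lc nu zs x = degree F * Lc mu ws x) \<and>
     (\<forall>x<t. x \<in> root_ords nu zs \<longrightarrow> related (Pc F nu zs x) (Pc G mu ws x))"

lemma newton_agree_sym: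
  "newton_agree t F nu zs G mu ws \<Longrightarrow> newton_agree t G mu ws F nu zs"
  unfolding newton_agree_def using related_sym by (metis Un_iff)

lemma Li_proportional_if_newton_agree:
  assumes "newton_agree t F nu zs G mu ws" and "1 \<le> i" "i \<le> iota mu ws"
    and "Ord nu zs i = Ord mu ws i" "Ord mu ws i \<le> t"
  shows "degree G * Li nu zs i = degree F * Li mu ws i"
  using assms Ord_in_root_ords[of i mu ws] unfolding newton_agree_def Li_def by auto

lemma Ppoly_related_if_newton_agree:
  assumes "newton_agree t F nu zs G mu ws" and "1 \<le> i" "i \<le> iota nu zs"
    and "Ord nu zs i = Ord mu ws i" "Ord nu zs i < t"
  shows "related (Ppoly F nu zs i) (Ppoly G mu ws i)"
  using assms Ord_in_root_ords[of i nu zs] unfolding newton_agree_def Ppoly_def by auto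

lemma unp_par_if_same_root_ords:
  fixes F G :: "'a::field fls poly"
  assumes agree: "newton_agree t F nu zs G mu ws"
    and same: "root_ords nu zs = root_ords mu ws" and top: "\<forall>x\<in>root_ords nu zs. x \<le> t"
    and par0: "ereal (real (degree G)) * O0 F = ereal (real (degree F)) * O0 G"
  shows "unp_par F nu zs G mu ws"
    and "\<forall>i. 1 \<le> i \<and> i < min (iota nu zs) (iota mu ws) \<longrightarrow> related (Ppoly F nu zs i) (Ppoly G mu ws i)"
proof -
  have io: "iota nu zs = iota mu ws" unfolding iota_def same ..
  have Od: "Ord nu zs i = Ord mu ws i" for i unfolding Ord_def same ..
  have Ole: "Ord nu zs i \<le> t" if "1 \<le> i" "i \<le> iota nu zs" for i
    using top Ord_in_root_ords[OF that] by blast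
  show "unp_par F nu zs G mu ws"
    unfolding unp_par_def unp_par_j_def
    using io Od par0 Ole Li_proportional_if_newton_agree[OF agree] by (simp add: Od)
  show "\<forall>i. 1 \<le> i \<and> i < min (iota nu zs) (iota mu ws) \<longrightarrow> related (Ppoly F nu zs i) (Ppoly G mu ws i)"
  proof (intro allI impI)
    fix i assume i: "1 \<le> i \<and> i < min (iota nu zs) (iota mu ws)"
    have "Ord nu zs i < Ord nu zs (iota nu zs)" using i by (intro Ord_strict_mono) auto
    also have "\<dots> \<le> t" using i by (intro Ole) auto
    finally show "related (Ppoly F nu zs i) (Ppoly G mu ws i)"
      using i Od by (intro Ppoly_related_if_newton_agree[OF agree]) auto
  qed
qed

lemma unp_less_if_extra_order:
  fixes F G :: "'a::field fls poly"
  assumes agree: "newton_agree t F nu zs G mu ws"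
    and A: "root_ords nu zs = insert s (root_ords mu ws)"
    and top: "\<forall>x\<in>root_ords mu ws. x \<le> t" and t: "t \<in> root_ords mu ws" "t < s"
    and Ls: "Lc nu zs s = 1"
    and par0: "ereal (real (degree F)) * O0 G = ereal (real (degree G)) * O0 F"
  shows "unp_less G mu ws F nu zs"
    and "\<forall>i. 1 \<le> i \<and> i < min (iota nu zs) (iota mu ws) \<longrightarrow> related (Ppoly F nu zs i) (Ppoly G mu ws i)"
proof -
  let ?B = "root_ords mu ws"
  have sl: "sorted_list_of_set (root_ords nu zs) = sorted_list_of_set ?B @ [s]"
    unfolding A using finite_root_ords top t by (intro sorted_list_of_set_insert_greatest) force+
  have io: "iota nu zs = iota mu ws + 1" unfolding iota_eq_length sl by simp
  have Oeq: "Ord nu zs i = Ord mu ws i" if "1 \<le> i" "i \<le> iota mu ws" for i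
  proof -
    have "i - 1 < length (sorted_list_of_set ?B)" using that unfolding iota_eq_length by linarith
    then show ?thesis unfolding Ord_def sl by (simp add: nth_append)
  qed
  have Ole: "Ord mu ws i \<le> t" if "1 \<le> i" "i \<le> iota mu ws" for i
    using top Ord_in_root_ords[OF that] by blast
  have iota_pos: "iota mu ws \<ge> 1"
    unfolding iota_def using t(1) finite_root_ords by (metis One_nat_def Suc_leI card_gt_0_iff empty_iff)
  have OhF: "Ohat nu zs = s" unfolding Ohat_def Ord_def sl io by (simp add: nth_append iota_eq_length)
  have "Ohat mu ws < s" unfolding Ohat_def using Ole[of "iota mu ws"] iota_pos t by simp
  moreover have "Lhat nu zs = 1" unfolding Lhat_def Li_def using OhF Ls unfolding Ohat_def by simp
  moreover have "unp_par_j G mu ws F nu zs (iota mu ws)"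
    unfolding unp_par_j_def using io par0 Oeq Ole Li_proportional_if_newton_agree[OF agree] by simp
  ultimately show "unp_less G mu ws F nu zs" unfolding unp_less_def using OhF io by auto
  show "\<forall>i. 1 \<le> i \<and> i < min (iota nu zs) (iota mu ws) \<longrightarrow> related (Ppoly F nu zs i) (Ppoly G mu ws i)"
  proof (intro allI impI)
    fix i assume i: "1 \<le> i \<and> i < min (iota nu zs) (iota mu ws)"
    have "Ord mu ws i < Ord mu ws (iota mu ws)" using i by (intro Ord_strict_mono) auto
    also have "\<dots> \<le> t" using iota_pos by (intro Ole) auto
    finally show "related (Ppoly F nu zs i) (Ppoly G mu ws i)"
      using i Oeq[of i] by (intro Ppoly_related_if_newton_agree[OF agree]) auto
  qed
qed

lemma unp_less_if_replaced_order:
  fixes F G :: "'a::field fls poly"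
  assumes agree: "newton_agree t F nu zs G mu ws"
    and A: "root_ords nu zs = insert s S" and B: "root_ords mu ws = insert t S"
    and S: "finite S" "\<forall>x\<in>S. x < t" and "t < s"
    and Ls: "Lc nu zs s = 1" and Lt: "Lc nu zs t = 1"
    and par0: "ereal (real (degree F)) * O0 G = ereal (real (degree G)) * O0 F"
  shows "unp_less G mu ws F nu zs"
    and "\<forall>i. 1 \<le> i \<and> i < min (iota nu zs) (iota mu ws) \<longrightarrow> related (Ppoly F nu zs i) (Ppoly G mu ws i)"
proof -
  have slA: "sorted_list_of_set (root_ords nu zs) = sorted_list_of_set S @ [s]"
    unfolding A using S \<open>t < s\<close> by (intro sorted_list_of_set_insert_greatest) force+
  have slB: "sorted_list_of_set (root_ords mu ws) = sorted_list_of_set S @ [t]"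
    unfolding B using S by (intro sorted_list_of_set_insert_greatest) auto
  have io: "iota nu zs = iota mu ws" and io': "iota mu ws = length (sorted_list_of_set S) + 1"
    unfolding iota_eq_length slA slB by simp_all
  have Oeq: "Ord nu zs i = Ord mu ws i" and Olt: "Ord mu ws i < t" if "1 \<le> i" "i < iota mu ws" for i
  proof -
    have "i - 1 < length (sorted_list_of_set S)" using that io' by linarith
    then have "Ord mu ws i = sorted_list_of_set S ! (i - 1)" "Ord nu zs i = sorted_list_of_set S ! (i - 1)"
      unfolding Ord_def slA slB by (simp_all add: nth_append)
    moreover have "sorted_list_of_set S ! (i - 1) \<in> S"
      using \<open>i - 1 < length (sorted_list_of_set S)\<close> S(1) by (intro sorted_list_of_set_nth_mem) auto
    ultimately show "Ord nu zs i = Ord mu ws i" "Ord mu ws i < t" using S(2) by auto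
  qed
  have OhF: "Ohat nu zs = s" unfolding Ohat_def Ord_def slA io io' by (simp add: nth_append)
  have OhG: "Ohat mu ws = t" unfolding Ohat_def Ord_def slB io' by (simp add: nth_append)
  have LhF: "Lhat nu zs = 1" unfolding Lhat_def Li_def using OhF Ls unfolding Ohat_def by simp
  have "Lhat mu ws = Lc mu ws t" unfolding Lhat_def Li_def using OhG unfolding Ohat_def by simp
  moreover have "degree G * Lc nu zs t = degree F * Lc mu ws t"
    using agree B unfolding newton_agree_def by blast
  ultimately have "degree F * Lhat mu ws = degree G * Lhat nu zs" using Lt LhF by simp
  moreover have "unp_par_j G mu ws F nu zs (iota mu ws - 1)"
    unfolding unp_par_j_def using io par0 io' Oeq Olt Li_proportional_if_newton_agree[OF agree]
    by (simp add: less_imp_le)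
  ultimately show "unp_less G mu ws F nu zs" unfolding unp_less_def using OhF OhG LhF io \<open>t < s\<close> by auto
  show "\<forall>i. 1 \<le> i \<and> i < min (iota nu zs) (iota mu ws) \<longrightarrow> related (Ppoly F nu zs i) (Ppoly G mu ws i)"
    using Oeq Olt io by (auto intro: Ppoly_related_if_newton_agree[OF agree])
qed

lemma root_ords_if_one_order_beyond:
  assumes agree: "newton_agree t F nu zs G mu ws"
    and top: "\<forall>x\<in>root_ords mu ws. x \<le> t" and t: "t \<in> root_ords mu ws" "t < s"
    and beyond: "root_ords nu zs \<inter> {t<..} = {s}"
  shows "root_ords nu zs = insert s (if t \<in> root_ords nu zs then root_ords mu ws else root_ords mu ws - {t})"
proof (intro set_eqI)
  fix x
  show "x \<in> root_ords nu zs \<longleftrightarrow>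
    x \<in> insert s (if t \<in> root_ords nu zs then root_ords mu ws else root_ords mu ws - {t})"
  proof (cases x t rule: linorder_cases)
    case less then show ?thesis using agree t(2) unfolding newton_agree_def by auto
  next
    case equal then show ?thesis using t by auto
  next
    case greater then show ?thesis using beyond top by force
  qed
qed

lemma unp_less_if_one_order_beyond:
  fixes F G :: "'a::field fls poly"
  assumes agree: "newton_agree t F nu zs G mu ws"
    and top: "\<forall>x\<in>root_ords mu ws. x \<le> t" and t: "t \<in> root_ords mu ws" "t < s"
    and beyond: "root_ords nu zs \<inter> {t<..} = {s}" and Ls: "Lc nu zs s = 1"
    and Lt: "t \<notin> root_ords nu zs \<Longrightarrow> Lc nu zs t = 1"
    and par0: "ereal (real (degree F)) * O0 G = ereal (real (degree G)) * O0 F"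
  shows "unp_less G mu ws F nu zs"
    and "\<forall>i. 1 \<le> i \<and> i < min (iota nu zs) (iota mu ws) \<longrightarrow> related (Ppoly F nu zs i) (Ppoly G mu ws i)"
proof -
  note A = root_ords_if_one_order_beyond[OF agree top t beyond]
  have "unp_less G mu ws F nu zs \<and>
    (\<forall>i. 1 \<le> i \<and> i < min (iota nu zs) (iota mu ws) \<longrightarrow> related (Ppoly F nu zs i) (Ppoly G mu ws i))"
  proof (cases "t \<in> root_ords nu zs")
    case True
    with A unp_less_if_extra_order[OF agree _ top t Ls par0] show ?thesis by simp
  next
    case False
    define S where "S = root_ords mu ws - {t}"
    have S: "finite S" "\<forall>x\<in>S. x < t" unfolding S_def using finite_root_ords top by force+
    have "root_ords mu ws = insert t S" using t unfolding S_def by blast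
    with A False unp_less_if_replaced_order[OF agree _ _ S t(2) Ls Lt[OF False] par0]
    show ?thesis unfolding S_def by simp
  qed
  then show "unp_less G mu ws F nu zs"
    and "\<forall>i. 1 \<le> i \<and> i < min (iota nu zs) (iota mu ws) \<longrightarrow> related (Ppoly F nu zs i) (Ppoly G mu ws i)"
    by blast+
qed

lemma count_eq_pos_iff_if_orders_proportional:
  fixes A B :: "'a::field fls"
  assumes AB: "A \<noteq> 0" "B \<noteq> 0" and ne: "zs \<noteq> []" "ws \<noteq> []"
    and o: "\<forall>r. length zs * order r (level_form B ws c) = length ws * order r (level_form A zs c)"
  shows "count_eq zs c > 0 \<longleftrightarrow> count_eq ws c > 0"
proof -
  have "order r (level_form A zs c) > 0 \<longleftrightarrow> order r (level_form B ws c) > 0" for r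
    using o ne by (metis length_0_conv mult_is_0 neq0_conv)
  then show ?thesis unfolding count_eq_pos_iff_order[OF AB(1), of zs] count_eq_pos_iff_order[OF AB(2), of ws] by simp
qed

lemma related_level_forms:
  fixes A B :: "'a::field fls"
  assumes alg: "\<forall>p :: 'a poly. degree p > 0 \<longrightarrow> (\<exists>x. poly p x = 0)"
    and AB: "A \<noteq> 0" "B \<noteq> 0" and ne: "zs \<noteq> []"
    and o: "\<forall>r. length zs * order r (level_form B ws c) = length ws * order r (level_form A zs c)"
    and L: "length ws * count_ge zs c = length zs * count_ge ws c"
  shows "related (level_form A zs c) (level_form B ws c)"
proof (rule related_if_orders_proportional[OF alg level_form_nonzero[OF AB(1)] level_form_nonzero[OF AB(2)]])
  show "\<forall>r. degree (level_form B ws c) * order r (level_form A zs c) =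
      degree (level_form A zs c) * order r (level_form B ws c)"
  proof
    fix r
    have "length zs * (count_ge ws c * order r (level_form A zs c))
        = length zs * (count_ge zs c * order r (level_form B ws c))"
      using o L by (metis mult.assoc mult.commute)
    then show "degree (level_form B ws c) * order r (level_form A zs c) =
        degree (level_form A zs c) * order r (level_form B ws c)"
      using ne unfolding degree_level_form[OF AB(1)] degree_level_form[OF AB(2)] by simp
  qed
qed

lemma related_Pc_if_related_level_forms:
  fixes F G :: "'a::field fls poly"
  assumes D: "D > 0" and iA: "inco A = inco (lead_coeff F)" and iB: "inco B = inco (lead_coeff G)"
    and rel: "related (level_form A zs c) (level_form B ws c)"
  shows "related (Pc F D zs (level_ord D c)) (Pc G D ws (level_ord D c))"
proof -
  have Pc: "Pc H D xs (level_ord D c) = smult ((-1) ^ length (filter (\<lambda>z. rord D z < level_ord D c) xs)) (level_form C xs c)"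
    if "inco C = inco (lead_coeff H)" for C :: "'a fls" and H xs
    unfolding level_form_eq_Pc[OF D that] by (simp add: left_minus_one_mult_self)
  show ?thesis unfolding Pc[OF iA] Pc[OF iB] by (rule related_smult[OF rel]) simp_all
qed

lemma root_ords_below_level:
  assumes D: "D > 0" and x: "x \<in> root_ords D xs" "x \<le> level_ord D cs"
  obtains c where "x = level_ord D c" "c \<le> cs" "count_eq xs c > 0"
proof -
  have "x \<noteq> \<infinity>" using x(2) level_ord_finite[OF D, of cs] by auto
  then obtain z where "z \<in> set xs" "z \<noteq> 0" "x = level_ord D (fls_subdegree z)"
    using root_ords_cases[OF D x(1)] by blast
  then show thesis
    using that x level_ord_le_iff[OF D] level_ord_in_root_ords_iff[OF D] by blast
qed

lemma newton_agree_up_to_terminal_level: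
  fixes F G :: "'a::field_char_0 fls poly"
  assumes alg: "\<forall>p :: 'a poly. degree p > 0 \<longrightarrow> (\<exists>x. poly p x = 0)"
    and D: "D > 0" and AB: "A \<noteq> 0" "B \<noteq> 0"
    and iA: "inco A = inco (lead_coeff F)" and iB: "inco B = inco (lead_coeff G)"
    and N: "degree F = length zs" and M: "degree G = length ws" and ne: "zs \<noteq> []" "ws \<noteq> []"
    and P: "\<forall>c\<le>cs. proportional_level A zs B ws c"
    and O: "\<forall>c<cs. \<forall>r. length zs * order r (level_form B ws c) = length ws * order r (level_form A zs c)"
  shows "newton_agree (level_ord D cs) F D zs G D ws"
  unfolding newton_agree_def
proof (intro conjI allI impI)
  fix x assume x: "x < level_ord D cs"
  have same_level: "level_ord D c \<in> root_ords D zs \<longleftrightarrow> level_ord D c \<in> root_ords D ws" if "c < cs" for c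
    unfolding level_ord_in_root_ords_iff[OF D]
    using count_eq_pos_iff_if_orders_proportional[OF AB ne] O that by blast
  show "x \<in> root_ords D zs \<longleftrightarrow> x \<in> root_ords D ws"
  proof
    assume "x \<in> root_ords D zs"
    then obtain c where "x = level_ord D c" "c \<le> cs" using root_ords_below_level[OF D] x by (meson less_imp_le)
    then show "x \<in> root_ords D ws" using same_level x \<open>x \<in> root_ords D zs\<close> level_ord_less_iff[OF D] by auto
  next
    assume "x \<in> root_ords D ws"
    then obtain c where "x = level_ord D c" "c \<le> cs" using root_ords_below_level[OF D] x by (meson less_imp_le)
    then show "x \<in> root_ords D zs" using same_level x \<open>x \<in> root_ords D ws\<close> level_ord_less_iff[OF D] by auto
  qed
  assume "x \<in> root_ords D zs"
  then obtain c where c: "x = level_ord D c" "c < cs"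
    using root_ords_below_level[OF D] x level_ord_less_iff[OF D] by (metis less_imp_le)
  have "related (level_form A zs c) (level_form B ws c)"
    using related_level_forms[OF alg AB ne(1)] O P c unfolding proportional_level_def by simp
  then show "related (Pc F D zs x) (Pc G D ws x)"
    unfolding c(1) by (rule related_Pc_if_related_level_forms[OF D iA iB])
next
  fix x assume "x \<le> level_ord D cs" "x \<in> root_ords D zs \<union> root_ords D ws"
  then obtain c where "x = level_ord D c" "c \<le> cs" using root_ords_below_level[OF D] by blast
  then show "degree G * Lc D zs x = degree F * Lc D ws x"
    using P N M unfolding proportional_level_def by (simp add: Lc_level_ord[OF D])
qed

lemma root_ords_eq_if_newton_agree:
  assumes "newton_agree t F nu zs G mu ws"
    and "\<forall>x\<in>root_ords nu zs. x \<le> t" "\<forall>x\<in>root_ords mu ws. x \<le> t"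
    and "t \<in> root_ords nu zs" "t \<in> root_ords mu ws"
  shows "root_ords nu zs = root_ords mu ws"
proof (intro set_eqI)
  fix x
  show "x \<in> root_ords nu zs \<longleftrightarrow> x \<in> root_ords mu ws"
  proof (cases x t rule: linorder_cases)
    case less then show ?thesis using assms(1) unfolding newton_agree_def by blast
  next
    case equal then show ?thesis using assms(4,5) by simp
  next
    case greater then show ?thesis using assms(2,3) by (auto simp: not_le[symmetric])
  qed
qed

lemma Lhat_proportional_if_unp_par:
  assumes "unp_par F nu zs G mu ws" and "iota nu zs \<ge> 1"
  shows "degree G * Lhat nu zs = degree F * Lhat mu ws"
  using assms unfolding unp_par_def unp_par_j_def Lhat_def by auto

section \<open>Ramified pairs with Jacobian in \<open>k((X))\<close>\<close>

locale ramified_pair =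
  fixes F G :: "'k::field_char_0 fls poly" and D :: nat and zs ws :: "'k fls list"
  assumes alg_closed: "\<forall>p :: 'k poly. degree p > 0 \<longrightarrow> (\<exists>x. poly p x = 0)"
    and degF: "degree F > 0" and degG: "degree G > 0" and jac: "degree (jac F G) = 0"
    and rF: "root_factorization F D zs" and rG: "root_factorization G D ws"
    and par0: "ereal (real (degree G)) * O0 F = ereal (real (degree F)) * O0 G"
    and int_neg: "intY F < 0 \<or> intY G < 0"
begin

abbreviation "A \<equiv> ramify D (lead_coeff F)"
abbreviation "B \<equiv> ramify D (lead_coeff G)"

lemma D_pos: "D > 0"
  using rF unfolding root_factorization_def by simp

lemma nonzero: "F \<noteq> 0" "G \<noteq> 0" "A \<noteq> 0" "B \<noteq> 0"
  using degF degG D_pos by (auto simp: ramify_eq_0_iff)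

lemma degree_eq_length: "degree F = length zs" "degree G = length ws"
  using degree_eq_length_if_root_factorization rF rG nonzero by blast+

lemma roots_nonempty: "zs \<noteq> []" "ws \<noteq> []"
  using degree_eq_length degF degG by auto

lemma degree_jac_factored: "degree (jac (smult A (\<Prod>z\<leftarrow>zs. [:-z,1:])) (smult B (\<Prod>w\<leftarrow>ws. [:-w,1:]))) = 0"
  using degree_jac_ramify[OF D_pos jac] rF rG unfolding root_factorization_def by simp

lemma subdegree_lead_proportional: "int (length ws) * fls_subdegree A = int (length zs) * fls_subdegree B"
proof -
  have "int D * (int (length ws) * fls_subdegree (lead_coeff F)) = int D * (int (length zs) * fls_subdegree (lead_coeff G))"
    using subdegree_lead_coeff_proportional[OF par0 nonzero(1,2)] unfolding degree_eq_length by simp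
  then show ?thesis using D_pos nonzero by (simp add: fls_subdegree_ramify ac_simps)
qed

lemma total_order_negative:
  "((\<forall>z\<in>set zs. z \<noteq> 0) \<and> fls_subdegree A + (\<Sum>z\<leftarrow>zs. fls_subdegree z) < 0) \<or>
   ((\<forall>w\<in>set ws. w \<noteq> 0) \<and> fls_subdegree B + (\<Sum>w\<leftarrow>ws. fls_subdegree w) < 0)"
  using int_neg intY_neg_ramified[OF rF nonzero(1)] intY_neg_ramified[OF rG nonzero(2)] by blast

lemma exists_terminal_newton_agree:
  obtains cs where "proportional_level A zs B ws cs" "terminal_level zs ws cs"
    and "newton_agree (level_ord D cs) F D zs G D ws"
proof -
  obtain cs where P: "\<forall>c\<le>cs. proportional_level A zs B ws c"
    and O: "\<forall>c<cs. \<forall>r. length zs * order r (level_form B ws c) = length ws * order r (level_form A zs c)"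
    and T: "terminal_level zs ws cs"
    using exists_terminal_level[OF nonzero(3,4) roots_nonempty degree_jac_factored
        subdegree_lead_proportional total_order_negative] by blast
  have "newton_agree (level_ord D cs) F D zs G D ws"
    using D_pos nonzero(3,4) degree_eq_length roots_nonempty P O
    by (intro newton_agree_up_to_terminal_level[OF alg_closed]) (simp_all add: inco_ramify)
  with P T that show thesis by blast
qed

lemma unp_par_if_common_top:
  assumes P: "proportional_level A zs B ws cs" and agree: "newton_agree (level_ord D cs) F D zs G D ws"
    and top: "count_gt zs cs = 0" "count_eq zs cs > 0" "count_gt ws cs = 0" "count_eq ws cs > 0"
  shows "unp_par F D zs G D ws"
    and "\<forall>i. 1 \<le> i \<and> i < min (iota D zs) (iota D ws) \<longrightarrow> related (Ppoly F D zs i) (Ppoly G D ws i)"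
    and "ereal (real (degree G)) * intY F = ereal (real (degree F)) * intY G"
    and "degree G * Lhat D zs = degree F * Lhat D ws"
proof -
  have le: "\<forall>x\<in>root_ords D zs. x \<le> level_ord D cs" "\<forall>x\<in>root_ords D ws. x \<le> level_ord D cs"
    and at: "level_ord D cs \<in> root_ords D zs" "level_ord D cs \<in> root_ords D ws"
    using top count_gt_0_iff[OF D_pos] level_ord_in_root_ords_iff[OF D_pos] by blast+
  note same = unp_par_if_same_root_ords[OF agree root_ords_eq_if_newton_agree[OF agree le at] le(1) par0]
  then show "unp_par F D zs G D ws"
    and "\<forall>i. 1 \<le> i \<and> i < min (iota D zs) (iota D ws) \<longrightarrow> related (Ppoly F D zs i) (Ppoly G D ws i)"
    by blast+
  have "iota D zs \<ge> 1"
    unfolding iota_def using at(1) finite_root_ords[of D zs] by (auto simp: Suc_le_eq card_gt_0_iff)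
  from Lhat_proportional_if_unp_par[OF same(1) this]
  show "degree G * Lhat D zs = degree F * Lhat D ws" .
  have nz: "\<forall>z\<in>set zs \<union> set ws. z \<noteq> 0" and "\<forall>z\<in>set zs \<union> set ws. fls_subdegree z \<le> cs"
    using top unfolding count_gt_def by (auto simp: filter_empty_conv)
  then show "ereal (real (degree G)) * intY F = ereal (real (degree F)) * intY G"
    using P level_order_above_roots[of zs cs A] level_order_above_roots[of ws cs B]
    unfolding proportional_level_def by (intro intY_proportional_ramified[OF rF rG nonzero(1,2) nz]) auto
qed

lemma unp_less_if_one_root_beyond:
  assumes agree: "newton_agree (level_ord D cs) F D zs G D ws"
    and beyond: "count_gt zs cs = 1" and top: "count_gt ws cs = 0" "count_eq ws cs > 0"
  shows "unp_less G D ws F D zs"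
    and "\<forall>i. 1 \<le> i \<and> i < min (iota D zs) (iota D ws) \<longrightarrow> related (Ppoly F D zs i) (Ppoly G D ws i)"
proof -
  obtain s where s: "s > level_ord D cs" "root_ords D zs \<inter> {level_ord D cs<..} = {s}" "Lc D zs s = 1"
      "level_ord D cs \<notin> root_ords D zs \<longrightarrow> Lc D zs (level_ord D cs) = 1"
    using count_gt_eq_1_D[OF D_pos beyond] by blast
  have "\<forall>x\<in>root_ords D ws. x \<le> level_ord D cs" "level_ord D cs \<in> root_ords D ws"
    using top count_gt_0_iff[OF D_pos] level_ord_in_root_ords_iff[OF D_pos] by blast+
  moreover have "ereal (real (degree F)) * O0 G = ereal (real (degree G)) * O0 F" using par0 by simp
  ultimately show "unp_less G D ws F D zs"
    and "\<forall>i. 1 \<le> i \<and> i < min (iota D zs) (iota D ws) \<longrightarrow> related (Ppoly F D zs i) (Ppoly G D ws i)"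
    using unp_less_if_one_order_beyond[OF agree _ _ s(1-3)] s(4) by blast+
qed

end

lemma jac_swap: "jac G F = - jac F G"
  unfolding jac_def minus_diff_eq by (simp only: mult.commute)

lemma ramified_pair_swap:
  assumes "ramified_pair F G D zs ws"
  shows "ramified_pair G F D ws zs"
proof -
  interpret ramified_pair F G D zs ws by (rule assms)
  have "degree (jac G F) = 0" using jac by (simp only: jac_swap[where F = F and G = G] degree_minus)
  moreover have "ereal (real (degree F)) * O0 G = ereal (real (degree G)) * O0 F" using par0 by simp
  ultimately show ?thesis using alg_closed degF degG rF rG int_neg unfolding ramified_pair_def by blast
qed

lemma (in ramified_pair) unp_relations:
  "unp_rel F D zs G D ws
     \<and> (\<forall>i. 1 \<le> i \<and> i < min (iota D zs) (iota D ws) \<longrightarrow>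
            related (Ppoly F D zs i) (Ppoly G D ws i))
     \<and> (Ohat D zs = Ohat D ws \<longrightarrow>
          unp_par F D zs G D ws
          \<and> ereal (real (degree G)) * intY F = ereal (real (degree F)) * intY G
          \<and> degree G * Lhat D zs = degree F * Lhat D ws)"
proof -
  interpret swapped: ramified_pair G F D ws zs
    using ramified_pair_swap ramified_pair_axioms by blast
  obtain cs where P: "proportional_level A zs B ws cs" and T: "terminal_level zs ws cs"
    and agree: "newton_agree (level_ord D cs) F D zs G D ws"
    by (rule exists_terminal_newton_agree)
  from T consider
      (common_top) "count_gt zs cs = 0" "count_eq zs cs > 0" "count_gt ws cs = 0" "count_eq ws cs > 0"
    | (F_beyond) "count_gt zs cs = 1" "count_gt ws cs = 0" "count_eq ws cs > 0"
    | (G_beyond) "count_gt ws cs = 1" "count_gt zs cs = 0" "count_eq zs cs > 0"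
    unfolding terminal_level_def by argo
  then show ?thesis
  proof cases
    case common_top
    then show ?thesis using unp_par_if_common_top[OF P agree] unfolding unp_rel_def by blast
  next
    case F_beyond
    then show ?thesis using unp_less_if_one_root_beyond[OF agree] unfolding unp_rel_def unp_less_def by auto
  next
    case G_beyond
    then show ?thesis
      using swapped.unp_less_if_one_root_beyond[OF newton_agree_sym[OF agree]] related_sym
      unfolding unp_rel_def unp_less_def by (auto simp: min.commute)
  qed
qed

theorem mainTheorem20:
  fixes F G :: "'k::field_char_0 fls poly"
    and nu mu :: nat and zs ws :: "'k fls list"
  assumes alg_closed: "\<forall>p :: 'k poly. degree p > 0 \<longrightarrow> (\<exists>x. poly p x = 0)"
    and degF: "degree F > 0" and degG: "degree G > 0"
    and jac: "degree (jac F G) = 0"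
    and rootsF: "root_factorization F nu zs"
    and rootsG: "root_factorization G mu ws"
    and par0: "ereal (real (degree G)) * O0 F = ereal (real (degree F)) * O0 G"
    and int_neg: "intY F < 0 \<or> intY G < 0"
  shows "unp_rel F nu zs G mu ws
     \<and> (\<forall>i. 1 \<le> i \<and> i < min (iota nu zs) (iota mu ws) \<longrightarrow>
            related (Ppoly F nu zs i) (Ppoly G mu ws i))
     \<and> (Ohat nu zs = Ohat mu ws \<longrightarrow>
          unp_par F nu zs G mu ws
          \<and> ereal (real (degree G)) * intY F = ereal (real (degree F)) * intY G
          \<and> degree G * Lhat nu zs = degree F * Lhat mu ws)"
proof -
  have nu: "nu > 0" and mu: "mu > 0"
    using rootsF rootsG unfolding root_factorization_def by simp_all
  let ?D = "nu * mu" and ?zs = "map (ramify mu) zs" and ?ws = "map (ramify nu) ws"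
  have "root_factorization F ?D ?zs" "root_factorization G ?D ?ws"
    using root_factorization_ramify[OF rootsF mu] root_factorization_ramify[OF rootsG nu]
    by (simp_all add: mult.commute)
  with assms have "ramified_pair F G ?D ?zs ?ws" unfolding ramified_pair_def by blast
  note common = ramified_pair.unp_relations[OF this]
  have "rord ?D (ramify mu z) = rord nu z" "rord ?D (ramify nu w) = rord mu w" for z w :: "'k fls"
    using rord_ramify[OF nu mu] rord_ramify[OF mu nu] by (simp_all add: mult.commute)
  note data = root_data_map[OF this(1) inco_ramify[OF mu]] root_data_map[OF this(2) inco_ramify[OF nu]]
  show ?thesis
    using common unfolding unp_rel_def unp_par_def unp_less_def unp_par_j_def data .
qed

end
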